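(* Let $\mathbb{S}=[0,1]$ with $0$ and $1$ identified, and let $H:\mathbb{S}\times\mathbb{R}\times\mathbb{R}\to\mathbb{R}$ be $C^\infty$ with $\frac{\partial^2H}{\partial p^2}>0$, $p\mapsto H(x,p,u)$ superlinear for each $(x,u)$, and $|\frac{\partial H}{\partial u}|\le\kappa$ for some $\kappa>0$. Let $u_0$ be a viscosity solution of $H(x,u'(x),u(x))=0$ on $\mathbb{S}$ such that $\frac{\partial H}{\partial p}(x,u_0'(x),u_0(x))\ne0$ at every differentiability point $x$ of $u_0$. Set $B(x)=\frac{\partial H}{\partial p}(x,u_0'(x),u_0(x))$, $$\mu=\frac{\int_0^1\frac{\partial H}{\partial u}(\tau,u_0'(\tau),u_0(\tau))B(\tau)^{-1}d\tau}{\int_0^1B(\tau)^{-1}d\tau},\qquad \rho(x)=\exp\left\{\int_0^x\frac{\mu-\frac{\partial H}{\partial u}(\tau,u_0'(\tau),u_0(\tau))}{B(\tau)}\,d\tau\right\}.$$ Assume $\mu<0$. For given $\Theta\in(\mu,0)$ set $w_\epsilon(x,t)=u_0(x)-\epsilon\rho(x)e^{-\Theta t}$. Then there exists $\tilde\epsilon_0=\tilde\epsilon_0(\Theta)>0$ such that: (1) for $\epsilon\in(0,\tilde\epsilon_0]$, $\partial_tw_\epsilon(x,t)+H(x,\partial_xw_\epsilon(x,t),w_\epsilon(x,t))\ge0$ for all $(x,t)\in\mathbb{S}\times\left[0,\frac{\ln\tilde\epsilon_0-\ln|\epsilon|}{-\Theta}\right]$; (2) for $\epsilon\in[-\tilde\epsilon_0,0)$,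 $\partial_tw_\epsilon(x,t)+H(x,\partial_xw_\epsilon(x,t),w_\epsilon(x,t))\le0$ for all $(x,t)\in\mathbb{S}\times\left[0,\frac{\ln\tilde\epsilon_0-\ln|\epsilon|}{-\Theta}\right]$.
   Context: It is known that under these assumptions $u_0$ is of class $C^\infty$, so $B$ is smooth and nowhere zero, $\rho$ is a smooth positive function on $\mathbb{S}$, and $w_\epsilon$ is $C^\infty$. *)

theory Defs
  imports "HOL-Analysis.Analysis"
begin

fun Ck :: "nat \<Rightarrow> ('a::real_normed_vector \<Rightarrow> real) \<Rightarrow> bool" where
  "Ck 0 f = continuous_on UNIV f"
| "Ck (Suc k) f = (\<exists>f'. (\<forall>z. (f has_derivative f' z) (at z)) \<and> (\<forall>v. Ck k (\<lambda>z. f' z v)))"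

definition smooth_fun :: "('a::real_normed_vector \<Rightarrow> real) \<Rightarrow> bool" where
  "smooth_fun f \<longleftrightarrow> (\<forall>k. Ck k f)"

definition Hp :: "(real \<Rightarrow> real \<Rightarrow> real \<Rightarrow> real) \<Rightarrow> real \<Rightarrow> real \<Rightarrow> real \<Rightarrow> real" where
  "Hp H x p u = deriv (\<lambda>q. H x q u) p"

definition Hpp :: "(real \<Rightarrow> real \<Rightarrow> real \<Rightarrow> real) \<Rightarrow> real \<Rightarrow> real \<Rightarrow> real \<Rightarrow> real" where
  "Hpp H x p u = deriv (\<lambda>q. Hp H x q u) p"

definition Hu :: "(real \<Rightarrow> real \<Rightarrow> real \<Rightarrow> real) \<Rightarrow> real \<Rightarrow> real \<Rightarrow> real \<Rightarrow> real" where
  "Hu H x p u = deriv (\<lambda>v. H x p v) u"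

text \<open>Functions on S = [0,1] with 0 ~ 1 are 1-periodic functions on the real line.\<close>
definition periodic1 :: "(real \<Rightarrow> 'b) \<Rightarrow> bool" where
  "periodic1 f \<longleftrightarrow> (\<forall>x. f (x + 1) = f x)"

definition local_max_at :: "(real \<Rightarrow> real) \<Rightarrow> real \<Rightarrow> bool" where
  "local_max_at g x \<longleftrightarrow> (\<exists>e>0. \<forall>y. \<bar>y - x\<bar> < e \<longrightarrow> g y \<le> g x)"

definition local_min_at :: "(real \<Rightarrow> real) \<Rightarrow> real \<Rightarrow> bool" where
  "local_min_at g x \<longleftrightarrow> (\<exists>e>0. \<forall>y. \<bar>y - x\<bar> < e \<longrightarrow> g x \<le> g y)"

definition viscosity_solution :: "(real \<Rightarrow> real \<Rightarrow> real \<Rightarrow> real) \<Rightarrow> (real \<Rightarrow> real) \<Rightarrow> bool" where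
  "viscosity_solution H u \<longleftrightarrow>
     continuous_on UNIV u \<and> periodic1 u \<and>
     (\<forall>\<phi> x. \<phi> C1_differentiable_on UNIV \<longrightarrow>
        (local_max_at (\<lambda>y. u y - \<phi> y) x \<longrightarrow> H x (deriv \<phi> x) (u x) \<le> 0) \<and>
        (local_min_at (\<lambda>y. u y - \<phi> y) x \<longrightarrow> H x (deriv \<phi> x) (u x) \<ge> 0))"

definition Bfun :: "(real \<Rightarrow> real \<Rightarrow> real \<Rightarrow> real) \<Rightarrow> (real \<Rightarrow> real) \<Rightarrow> real \<Rightarrow> real" where
  "Bfun H u0 x = Hp H x (deriv u0 x) (u0 x)"

definition mu_const :: "(real \<Rightarrow> real \<Rightarrow> real \<Rightarrow> real) \<Rightarrow> (real \<Rightarrow> real) \<Rightarrow> real" where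
  "mu_const H u0 =
     (LBINT \<tau>=0..1. Hu H \<tau> (deriv u0 \<tau>) (u0 \<tau>) / Bfun H u0 \<tau>) /
     (LBINT \<tau>=0..1. 1 / Bfun H u0 \<tau>)"

text \<open>rho(x) = exp(int_0^x ...), with the oriented interval integral (so it is
  defined on all of the real line, i.e. as a function on S via periodicity).\<close>
definition rho :: "(real \<Rightarrow> real \<Rightarrow> real \<Rightarrow> real) \<Rightarrow> (real \<Rightarrow> real) \<Rightarrow> real \<Rightarrow> real" where
  "rho H u0 x = exp (LBINT \<tau>=0..x.
      (mu_const H u0 - Hu H \<tau> (deriv u0 \<tau>) (u0 \<tau>)) / Bfun H u0 \<tau>)"

definition w_eps :: "(real \<Rightarrow> real \<Rightarrow> real \<Rightarrow> real) \<Rightarrow> (real \<Rightarrow> real) \<Rightarrow> real \<Rightarrow> real \<Rightarrow> real \<Rightarrow> real \<Rightarrow> real" where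
  "w_eps H u0 \<Theta> \<epsilon> x t = u0 x - \<epsilon> * rho H u0 x * exp (- \<Theta> * t)"

end

theory Submission
  imports Defs
begin

(*
  Since p \<mapsto> H x p u is strictly convex and coercive, the slopes p with H z p (u0 z) \<le> 0 form an
  interval [slope_lo z, slope_hi z]. Testing u0 with parabolas shows that u0 has one-sided
  derivatives everywhere, each equal to slope_lo z or slope_hi z, and the supersolution property
  excludes convex corners. The nondegeneracy hypothesis forces slope_lo z < slope_hi z, hence both
  endpoints depend continuously on z, and a propagation argument combined with periodicity gives
  u0' = slope_lo everywhere or u0' = slope_hi everywhere. So u0 is C^1 and solves
  H z (u0' z) (u0 z) = 0 classically.

  By construction rho solves the linearised equation B rho' + H_u rho = mu rho. Writing
  w_eps = u0 - d rho with d = eps exp (- Theta t), the residual of w_eps is therefore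
  d rho (Theta - mu) + o(d) uniformly on [0, 1], which has the sign of eps as long as
  |d| \<le> eps0, that is, for t \<le> (ln eps0 - ln |eps|) / (- Theta).
*)

section \<open>Strictly convex functions\<close>

definition strictly_convex :: "(real \<Rightarrow> real) \<Rightarrow> bool" where
  "strictly_convex f \<longleftrightarrow>
     (\<forall>p q t. p \<noteq> q \<longrightarrow> 0 < t \<longrightarrow> t < 1 \<longrightarrow> f ((1 - t) * p + t * q) < (1 - t) * f p + t * f q)"

lemma strictly_convex_three_points:
  assumes "strictly_convex f" "p1 < p2" "p2 < p3"
  shows "(p3 - p1) * f p2 < (p3 - p2) * f p1 + (p2 - p1) * f p3"
proof -
  define t where "t = (p2 - p1) / (p3 - p1)"
  have t: "0 < t" "t < 1" and tp: "t * (p3 - p1) = p2 - p1"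
    using assms(2,3) by (auto simp: t_def field_simps)
  then have p2: "p2 = (1 - t) * p1 + t * p3"
    by (simp add: algebra_simps)
  have "f p2 < (1 - t) * f p1 + t * f p3"
    using assms t unfolding strictly_convex_def p2 by (metis less_irrefl order.strict_trans)
  then have "(p3 - p1) * f p2 < (p3 - p1) * ((1 - t) * f p1 + t * f p3)"
    using assms by simp
  also have "\<dots> = (p3 - p1 - t * (p3 - p1)) * f p1 + t * (p3 - p1) * f p3"
    by (simp add: algebra_simps)
  finally show ?thesis
    unfolding tp by simp
qed

lemma strictly_convex_increasing_right:
  assumes "strictly_convex f" "p1 < p2" "p2 < p3" "f p1 \<le> f p2"
  shows "f p2 < f p3"
proof -
  have "(p3 - p1) * f p2 < (p3 - p2) * f p1 + (p2 - p1) * f p3"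
    using strictly_convex_three_points assms by blast
  moreover have "(p3 - p2) * f p1 \<le> (p3 - p2) * f p2"
    using assms by simp
  ultimately have "(p2 - p1) * f p2 < (p2 - p1) * f p3"
    by (simp add: algebra_simps)
  then show ?thesis
    using assms by simp
qed

lemma strictly_convex_increasing_left:
  assumes "strictly_convex f" "p3 < p2" "p2 < p1" "f p1 \<le> f p2"
  shows "f p2 < f p3"
proof -
  have "(p1 - p3) * f p2 < (p1 - p2) * f p3 + (p2 - p3) * f p1"
    using strictly_convex_three_points[OF assms(1,2,3)] by simp
  moreover have "(p2 - p3) * f p1 \<le> (p2 - p3) * f p2"
    using assms by simp
  ultimately have "(p1 - p2) * f p2 < (p1 - p2) * f p3"
    by (simp add: algebra_simps)
  then show ?thesis
    using assms by simp
qed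

lemma strictly_convex_less_max:
  assumes "strictly_convex f" "p1 < p" "p < p3"
  shows "f p < max (f p1) (f p3)"
proof -
  have "(p3 - p1) * f p < (p3 - p) * f p1 + (p - p1) * f p3"
    using strictly_convex_three_points assms by blast
  also have "\<dots> \<le> (p3 - p) * max (f p1) (f p3) + (p - p1) * max (f p1) (f p3)"
    using assms by (intro add_mono mult_left_mono) auto
  also have "\<dots> = (p3 - p1) * max (f p1) (f p3)"
    by (simp add: algebra_simps)
  finally show ?thesis
    using assms by simp
qed

lemma strictly_convex_le_max:
  assumes "strictly_convex f" "p1 \<le> p" "p \<le> p3"
  shows "f p \<le> max (f p1) (f p3)"
  using strictly_convex_less_max[OF assms(1), of p1 p p3] assms(2,3)
  by (cases "p = p1 \<or> p = p3") auto

lemma strictly_convex_if_deriv_strict_mono: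
  assumes deriv: "\<And>q. (f has_real_derivative f' q) (at q)"
    and mono: "\<And>p q. p < q \<Longrightarrow> f' p < f' q"
  shows "strictly_convex f"
proof -
  have convex: "f ((1 - t) * p + t * q) < (1 - t) * f p + t * f q"
    if "p < q" "0 < t" "t < 1" for p q t
  proof -
    define m where "m = (1 - t) * p + t * q"
    have m: "m - p = t * (q - p)" "q - m = (1 - t) * (q - p)"
      by (simp_all add: m_def algebra_simps)
    then have "p < m" "m < q"
      using that by (metis diff_gt_0_iff_gt mult_pos_pos)+
    moreover have "continuous_on {a..b} f" "f differentiable (at x)" for a b x
      using deriv by (auto intro: continuous_at_imp_continuous_on DERIV_isCont
          real_differentiable_def[THEN iffD2])
    ultimately obtain \<xi>1 \<xi>2 where \<xi>: "p < \<xi>1" "\<xi>1 < m" "f m - f p = (m - p) * f' \<xi>1"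
        "m < \<xi>2" "\<xi>2 < q" "f q - f m = (q - m) * f' \<xi>2"
      using MVT[of p m f] MVT[of m q f] deriv DERIV_unique by metis
    have "(1 - t) * f p + t * f q - f m = t * (f q - f m) - (1 - t) * (f m - f p)"
      by (simp add: algebra_simps)
    also have "\<dots> = t * (1 - t) * (q - p) * (f' \<xi>2 - f' \<xi>1)"
      unfolding \<xi>(3,6) m by (simp add: algebra_simps)
    also have "\<dots> > 0"
      using that \<xi> mono[of \<xi>1 \<xi>2] by (intro mult_pos_pos) auto
    finally show ?thesis
      by (simp add: m_def)
  qed
  show ?thesis
    unfolding strictly_convex_def
  proof (intro allI impI)
    fix p q t :: real
    assume "p \<noteq> q" "0 < t" "t < 1"
    then consider "p < q" | "q < p"
      by linarith
    then show "f ((1 - t) * p + t * q) < (1 - t) * f p + t * f q"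
    proof cases
      case 2
      then show ?thesis
        using convex[OF 2, of "1 - t"] \<open>0 < t\<close> \<open>t < 1\<close> by (simp add: algebra_simps)
    qed (use convex \<open>0 < t\<close> \<open>t < 1\<close> in blast)
  qed
qed

section \<open>Test functions and one-sided derivatives\<close>

lemma parabola_C1: "(\<lambda>y::real. q * (y - x) + K * (y - x)^2) C1_differentiable_on UNIV"
  by (intro C1_differentiable_on_add C1_differentiable_on_mult C1_differentiable_on_diff
      C1_differentiable_on_const C1_differentiable_on_ident) (simp add: power2_eq_square)

lemma deriv_parabola: "deriv (\<lambda>y::real. q * (y - x) + K * (y - x)^2) w = q + 2 * K * (w - x)"
  by (rule DERIV_imp_deriv) (auto intro!: derivative_eq_intros simp: algebra_simps)

lemma local_max_at_interval:
  assumes "c < w" "w < d" "\<And>y. c \<le> y \<Longrightarrow> y \<le> d \<Longrightarrow> f y \<le> f w"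
  shows "local_max_at f w"
  unfolding local_max_at_def
  by (rule exI[of _ "min (w - c) (d - w)"]) (use assms in \<open>auto simp: abs_less_iff\<close>)

lemma local_min_at_interval:
  assumes "c < w" "w < d" "\<And>y. c \<le> y \<Longrightarrow> y \<le> d \<Longrightarrow> f w \<le> f y"
  shows "local_min_at f w"
  unfolding local_min_at_def
  by (rule exI[of _ "min (w - c) (d - w)"]) (use assms in \<open>auto simp: abs_less_iff\<close>)

lemma local_max_at_reflect: "local_max_at g x \<Longrightarrow> local_max_at (\<lambda>y. g (- y)) (- x)"
  unfolding local_max_at_def
  by (metis abs_minus_commute add.inverse_inverse diff_minus_eq_add uminus_add_conv_diff)

lemma local_min_at_reflect: "local_min_at g x \<Longrightarrow> local_min_at (\<lambda>y. g (- y)) (- x)"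
  unfolding local_min_at_def
  by (metis abs_minus_commute add.inverse_inverse diff_minus_eq_add uminus_add_conv_diff)

lemma C1_differentiable_on_reflect:
  assumes "\<phi> C1_differentiable_on UNIV"
  shows "(\<lambda>y::real. \<phi> (- y)) C1_differentiable_on UNIV"
proof -
  have "(\<phi> \<circ> uminus) C1_differentiable_on UNIV"
    by (rule C1_differentiable_compose) (auto intro: C1_differentiable_on_subset[OF assms]
        simp: vimage_def minus_equation_iff[of _ "_::real"])
  then show ?thesis
    by (simp add: o_def)
qed

lemma deriv_reflect:
  assumes "(\<phi>::real \<Rightarrow> real) differentiable at x"
  shows "deriv (\<lambda>y. \<phi> (- y)) (- x) = - deriv \<phi> x"
proof -
  have "DERIV \<phi> (- (- x)) :> deriv \<phi> x"
    using assms by (simp add: DERIV_deriv_iff_real_differentiable)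
  then show ?thesis
    by (subst (asm) DERIV_mirror) (rule DERIV_imp_deriv)
qed

lemma eventually_at_if_eventually_nhds: "eventually P (nhds x) \<Longrightarrow> eventually P (at x within S)"
  by (auto simp: eventually_at_filter elim: eventually_mono)

lemma eventually_less_nhds:
  fixes f g :: "'a::topological_space \<Rightarrow> 'b::linorder_topology"
  assumes "continuous_on UNIV f" "continuous_on UNIV g" "f z < g z"
  shows "\<forall>\<^sub>F w in nhds z. f w < g w"
  unfolding eventually_nhds using assms
  by (intro exI[of _ "{w. f w < g w}"]) (auto intro: open_Collect_less)

lemma has_real_derivative_at_right_if_bounds:
  fixes f :: "real \<Rightarrow> real"
  assumes lower: "\<And>a. a < c \<Longrightarrow> \<forall>\<^sub>F y in at_right z. a * (y - z) \<le> f y - f z"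
    and upper: "\<And>a. c < a \<Longrightarrow> \<forall>\<^sub>F y in at_right z. f y - f z \<le> a * (y - z)"
  shows "(f has_real_derivative c) (at_right z)"
  unfolding has_field_derivative_iff
proof (rule order_tendstoI)
  fix a
  assume "a < c"
  then have "\<forall>\<^sub>F y in at_right z. (a + c) / 2 * (y - z) \<le> f y - f z \<and> z < y"
    using lower[of "(a + c) / 2"] eventually_at_right_less eventually_conj by auto
  then show "\<forall>\<^sub>F y in at_right z. a < (f y - f z) / (y - z)"
  proof (rule eventually_mono)
    fix y
    assume "(a + c) / 2 * (y - z) \<le> f y - f z \<and> z < y"
    then have "(a + c) / 2 \<le> (f y - f z) / (y - z)"
      by (simp add: pos_le_divide_eq)
    moreover have "a < (a + c) / 2"
      using \<open>a < c\<close> by simp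
    ultimately show "a < (f y - f z) / (y - z)"
      by (rule order.strict_trans2[rotated])
  qed
next
  fix a
  assume "c < a"
  then have "\<forall>\<^sub>F y in at_right z. f y - f z \<le> (a + c) / 2 * (y - z) \<and> z < y"
    using upper[of "(a + c) / 2"] eventually_at_right_less eventually_conj by auto
  then show "\<forall>\<^sub>F y in at_right z. (f y - f z) / (y - z) < a"
  proof (rule eventually_mono)
    fix y
    assume "f y - f z \<le> (a + c) / 2 * (y - z) \<and> z < y"
    then have "(f y - f z) / (y - z) \<le> (a + c) / 2"
      by (simp add: pos_divide_le_eq)
    moreover have "(a + c) / 2 < a"
      using \<open>c < a\<close> by simp
    ultimately show "(f y - f z) / (y - z) < a"
      by (rule order.strict_trans1)
  qed
qed

lemma eventually_less_if_has_real_derivative_at_right: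
  fixes f :: "real \<Rightarrow> real"
  assumes "(f has_real_derivative c) (at_right z)" "c < a"
  shows "\<forall>\<^sub>F y in at_right z. f y - f z < a * (y - z)"
proof -
  have "\<forall>\<^sub>F y in at_right z. (f y - f z) / (y - z) < a \<and> z < y"
    using assms unfolding has_field_derivative_iff
    by (intro eventually_conj order_tendstoD(2) eventually_at_right_less)
  then show ?thesis
    by (rule eventually_mono) (auto simp: pos_divide_less_eq)
qed

lemma eventually_greater_if_has_real_derivative_at_right:
  fixes f :: "real \<Rightarrow> real"
  assumes "(f has_real_derivative c) (at_right z)" "a < c"
  shows "\<forall>\<^sub>F y in at_right z. a * (y - z) < f y - f z"
proof -
  have "\<forall>\<^sub>F y in at_right z. a < (f y - f z) / (y - z) \<and> z < y"
    using assms unfolding has_field_derivative_iff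
    by (intro eventually_conj order_tendstoD(1) eventually_at_right_less)
  then show ?thesis
    by (rule eventually_mono) (auto simp: pos_less_divide_eq)
qed

lemma has_real_derivative_at_left_right:
  "(f has_real_derivative c) (at_left z) \<Longrightarrow> (f has_real_derivative c) (at_right z) \<Longrightarrow>
    (f has_real_derivative c) (at z)"
  for f :: "real \<Rightarrow> real"
  by (simp add: has_field_derivative_iff filterlim_at_split)

lemma has_real_derivative_at_left_reflect:
  fixes f :: "real \<Rightarrow> real"
  assumes "((\<lambda>y. f (- y)) has_real_derivative c) (at_right (- z))"
  shows "(f has_real_derivative - c) (at_left z)"
proof -
  have "((\<lambda>y. - ((f (- y) - f z) / (y + z))) \<longlongrightarrow> - c) (at_right (- z))"
    using tendsto_minus[OF assms[unfolded has_field_derivative_iff]] by simp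
  then show ?thesis
    unfolding has_field_derivative_iff
    by (subst filterlim_at_left_to_right) (simp add: minus_divide_right add.commute)
qed

lemma local_min_at_if_eventually:
  assumes "\<forall>\<^sub>F y in at x. f x \<le> f y"
  shows "local_min_at f x"
proof -
  obtain d where "0 < d" and d: "\<And>y. y \<noteq> x \<Longrightarrow> \<bar>y - x\<bar> < d \<Longrightarrow> f x \<le> f y"
    using assms by (auto simp: eventually_at dist_real_def)
  show ?thesis
    unfolding local_min_at_def
  proof (intro exI[of _ d] conjI allI impI \<open>0 < d\<close>)
    fix y
    assume "\<bar>y - x\<bar> < d"
    then show "f x \<le> f y"
      using d by (cases "y = x") auto
  qed
qed

lemma has_real_derivative_at_left_if_deriv_tendsto:
  fixes f f' :: "real \<Rightarrow> real"
  assumes cont: "continuous_on UNIV f" and "a < x"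
    and deriv: "\<And>y. y \<in> {a<..<x} \<Longrightarrow> (f has_real_derivative f' y) (at y)"
    and lim: "(f' \<longlongrightarrow> L) (at_left x)"
  shows "(f has_real_derivative L) (at_left x)"
  unfolding has_field_derivative_iff tendsto_iff
proof (intro allI impI)
  fix \<epsilon> :: real
  assume "0 < \<epsilon>"
  then obtain b where "b < x" and b: "\<And>y. b < y \<Longrightarrow> y < x \<Longrightarrow> dist (f' y) L < \<epsilon>"
    using lim unfolding tendsto_iff eventually_at_left_field by blast
  show "\<forall>\<^sub>F y in at_left x. dist ((f y - f x) / (y - x)) L < \<epsilon>"
    unfolding eventually_at_left_field
  proof (intro exI[of _ "max a b"] conjI allI impI)
    show "max a b < x"
      using \<open>a < x\<close> \<open>b < x\<close> by simp
    fix y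
    assume y: "max a b < y" "y < x"
    have "continuous_on {y..x} f"
      using cont continuous_on_subset by blast
    moreover have "f differentiable at t" if "y < t" "t < x" for t
      using deriv[of t] that y real_differentiable_def by auto
    ultimately obtain \<xi> where \<xi>: "y < \<xi>" "\<xi> < x" "f x - f y = (x - y) * f' \<xi>"
      using MVT[OF y(2)] deriv y
      by (metis DERIV_unique greaterThanLessThan_iff max_less_iff_conj order.strict_trans)
    then have "(f y - f x) / (y - x) = f' \<xi>"
      by (simp add: field_simps)
    then show "dist ((f y - f x) / (y - x)) L < \<epsilon>"
      using b \<xi> y by simp
  qed
qed

lemma periodic_shift_nat:
  assumes "\<And>x. f (x + 1) = f x"
  shows "f (x + real n) = f x"
proof (induction n)
  case (Suc n)
  have "f (x + real (Suc n)) = f ((x + real n) + 1)"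
    by (simp add: algebra_simps)
  then show ?case
    using assms Suc by simp
qed simp

section \<open>Viscosity solutions of strictly convex coercive equations\<close>

locale convex_viscosity_solution =
  fixes G :: "real \<Rightarrow> real \<Rightarrow> real \<Rightarrow> real" and u :: "real \<Rightarrow> real"
  assumes continuous_G: "continuous_on UNIV (\<lambda>(x, p, v). G x p v)"
    and convex_G: "\<And>x v. strictly_convex (\<lambda>p. G x p v)"
    and coercive_G: "\<And>x v. \<exists>C. \<forall>p. \<bar>p\<bar> - C \<le> G x p v"
    and continuous_u: "continuous_on UNIV u"
    and subsolution: "\<And>\<phi> x. \<phi> C1_differentiable_on UNIV \<Longrightarrow> local_max_at (\<lambda>y. u y - \<phi> y) x \<Longrightarrow>
      G x (deriv \<phi> x) (u x) \<le> 0"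
    and supersolution: "\<And>\<phi> x. \<phi> C1_differentiable_on UNIV \<Longrightarrow> local_min_at (\<lambda>y. u y - \<phi> y) x \<Longrightarrow>
      G x (deriv \<phi> x) (u x) \<ge> 0"
begin

lemma subsolution_parabola:
  assumes "local_max_at (\<lambda>y. u y - (q * (y - x) + K * (y - x)^2)) w"
  shows "G w (q + 2 * K * (w - x)) (u w) \<le> 0"
  using subsolution[OF parabola_C1 assms] by (simp add: deriv_parabola)

lemma supersolution_parabola:
  assumes "local_min_at (\<lambda>y. u y - (q * (y - x) + K * (y - x)^2)) w"
  shows "G w (q + 2 * K * (w - x)) (u w) \<ge> 0"
  using supersolution[OF parabola_C1 assms] by (simp add: deriv_parabola)

lemma reflect: "convex_viscosity_solution (\<lambda>x p v. G (- x) (- p) v) (\<lambda>x. u (- x))"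
proof
  have "continuous_on UNIV (\<lambda>z::real \<times> real \<times> real. (- fst z, - fst (snd z), snd (snd z)))"
    by (intro continuous_intros)
  from continuous_on_compose2[OF continuous_G this]
  show "continuous_on UNIV (\<lambda>(x, p, v). G (- x) (- p) v)"
    by (simp add: case_prod_beta)
next
  fix x v
  show "strictly_convex (\<lambda>p. G (- x) (- p) v)"
    using convex_G[of "- x" v] unfolding strictly_convex_def
    by (metis (no_types, opaque_lifting) minus_add_distrib mult_minus_right neg_equal_iff_equal)
  show "\<exists>C. \<forall>p. \<bar>p\<bar> - C \<le> G (- x) (- p) v"
    using coercive_G[of "- x" v] by (metis abs_minus_cancel)
next
  show "continuous_on UNIV (\<lambda>x. u (- x))"
    by (intro continuous_on_compose2[OF continuous_u] continuous_intros) auto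
next
  fix \<phi> :: "real \<Rightarrow> real" and x :: real
  assume C1: "\<phi> C1_differentiable_on UNIV"
  have \<phi>: "(\<lambda>y. \<phi> (- y)) C1_differentiable_on UNIV" "deriv (\<lambda>y. \<phi> (- y)) (- x) = - deriv \<phi> x"
    using C1 C1_differentiable_on_reflect
    by (auto intro: deriv_reflect simp: C1_differentiable_on_eq)
  show "G (- x) (- deriv \<phi> x) (u (- x)) \<le> 0" if "local_max_at (\<lambda>y. u (- y) - \<phi> y) x"
    using subsolution[OF \<phi>(1), of "- x"] local_max_at_reflect[OF that] \<phi>(2) by simp
  show "G (- x) (- deriv \<phi> x) (u (- x)) \<ge> 0" if "local_min_at (\<lambda>y. u (- y) - \<phi> y) x"
    using supersolution[OF \<phi>(1), of "- x"] local_min_at_reflect[OF that] \<phi>(2) by simp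
qed

lemma continuous_on_G_u: "continuous_on UNIV (\<lambda>z. G (fst z) (snd z) (u (fst z)))"
proof -
  have "continuous_on UNIV (\<lambda>z::real \<times> real. (fst z, snd z, u (fst z)))"
    by (intro continuous_intros continuous_on_compose2[OF continuous_u]) auto
  from continuous_on_compose2[OF continuous_G this] show ?thesis
    by simp
qed

lemma continuous_on_G_u_x: "continuous_on UNIV (\<lambda>w. G w p (u w))"
  using continuous_on_compose2[OF continuous_on_G_u, of UNIV "\<lambda>w. (w, p)"]
  by (simp add: continuous_intros)

lemma continuous_on_G_u_p: "continuous_on UNIV (\<lambda>p. G z p (u z))"
  using continuous_on_compose2[OF continuous_on_G_u, of UNIV "\<lambda>p. (z, p)"]
  by (simp add: continuous_intros)

lemma eventually_G_less:
  "G z p (u z) < c \<Longrightarrow> \<forall>\<^sub>F w in nhds z. G w p (u w) < c"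
  by (rule eventually_less_nhds) (auto intro: continuous_on_G_u_x)

lemma eventually_G_less_G:
  "G z p (u z) < G z q (u z) \<Longrightarrow> \<forall>\<^sub>F w in nhds z. G w p (u w) < G w q (u w)"
  by (rule eventually_less_nhds) (auto intro: continuous_on_G_u_x)

lemma eventually_G_greater:
  "c < G z p (u z) \<Longrightarrow> \<forall>\<^sub>F w in nhds z. c < G w p (u w)"
  by (rule eventually_less_nhds) (auto intro: continuous_on_G_u_x)

lemma bounded_on_Icc: "\<exists>M\<ge>0. \<forall>w\<in>{a..b}. \<bar>u w\<bar> \<le> M"
proof -
  have "bounded (u ` {a..b})"
    by (intro compact_imp_bounded compact_continuous_image continuous_on_subset[OF continuous_u])
      auto
  then obtain M where "\<forall>w\<in>{a..b}. \<bar>u w\<bar> \<le> M"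
    by (auto simp: bounded_iff)
  then show ?thesis
    by (intro exI[of _ "max M 0"]) auto
qed

text \<open>Maximising u minus a steep parabola centred at z produces a touching point, where the
  subsolution property applies.\<close>
lemma nonpositive_somewhere_near:
  assumes "r > 0"
  shows "\<exists>w p. \<bar>w - z\<bar> < r \<and> G w p (u w) \<le> 0"
proof -
  define \<rho> where "\<rho> = r / 2"
  have \<rho>: "0 < \<rho>" "\<rho> < r"
    using assms by (auto simp: \<rho>_def)
  obtain M where M: "\<forall>w\<in>{z - \<rho>..z + \<rho>}. \<bar>u w\<bar> \<le> M"
    using bounded_on_Icc by blast
  define K where "K = (2 * M + 1) / \<rho>^2"
  have K: "K * \<rho>^2 = 2 * M + 1"
    using \<rho> by (simp add: K_def)
  define \<Phi> where "\<Phi> y = u y - (0 * (y - z) + K * (y - z)^2)" for y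
  have "continuous_on {z - \<rho>..z + \<rho>} \<Phi>"
    unfolding \<Phi>_def by (intro continuous_intros continuous_on_subset[OF continuous_u]) auto
  then obtain w where w: "w \<in> {z - \<rho>..z + \<rho>}" "\<And>y. y \<in> {z - \<rho>..z + \<rho>} \<Longrightarrow> \<Phi> y \<le> \<Phi> w"
    using continuous_attains_sup[OF compact_Icc, of "z - \<rho>" "z + \<rho>" \<Phi>] \<rho> by auto
  have "\<Phi> (z - \<rho>) < \<Phi> z" "\<Phi> (z + \<rho>) < \<Phi> z"
    using M[rule_format, of z] M[rule_format, of "z - \<rho>"] M[rule_format, of "z + \<rho>"] \<rho> K
    by (auto simp: \<Phi>_def abs_le_iff)
  with w have "z - \<rho> < w" "w < z + \<rho>"
    by (smt (verit) atLeastAtMost_iff \<rho>(1))+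
  then have "local_max_at \<Phi> w"
    using w(2) by (intro local_max_at_interval) auto
  then have "G w (0 + 2 * K * (w - z)) (u w) \<le> 0"
    unfolding \<Phi>_def by (rule subsolution_parabola)
  then show ?thesis
    using \<open>z - \<rho> < w\<close> \<open>w < z + \<rho>\<close> \<rho> by (intro exI[of _ w] exI[of _ "2 * K * (w - z)"]) auto
qed

lemma eventually_positive_on_compact:
  assumes "compact K" "\<forall>p\<in>K. 0 < G z p (u z)"
  shows "\<forall>\<^sub>F w in nhds z. \<forall>p\<in>K. 0 < G w p (u w)"
proof -
  have "open {x. 0 < G (fst x) (snd x) (u (fst x))}"
    by (rule open_Collect_less[OF continuous_on_const continuous_on_G_u])
  moreover have "{z} \<times> K \<subseteq> {x. 0 < G (fst x) (snd x) (u (fst x))}"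
    using assms(2) by (simp add: subset_iff mem_Times_iff)
  ultimately have "\<exists>X. z \<in> X \<and> open X \<and> X \<times> K \<subseteq> {x. 0 < G (fst x) (snd x) (u (fst x))}"
    by (rule Elementary_Topology.tube_lemma[OF assms(1)])
  then obtain X where X: "z \<in> X" "open X" "X \<times> K \<subseteq> {x. 0 < G (fst x) (snd x) (u (fst x))}"
    by blast
  show ?thesis
    unfolding eventually_nhds
  proof (intro exI[of _ X] conjI ballI X(1,2))
    fix w p
    assume "w \<in> X" "p \<in> K"
    then show "0 < G w p (u w)"
      using X(3) by (auto simp: subset_iff)
  qed
qed

text \<open>By coercivity and convexity, positivity for large |p| follows from positivity and monotonicity
  at p = P and p = - P, so only the compact range [-P, P] needs the tube lemma.\<close>
lemma eventually_positive_if_positive: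
  assumes pos: "\<forall>p. 0 < G z p (u z)"
  shows "\<forall>\<^sub>F w in nhds z. \<forall>p. 0 < G w p (u w)"
proof -
  obtain C where C: "\<forall>p. \<bar>p\<bar> - C \<le> G z p (u z)"
    using coercive_G by blast
  define P where "P = C + \<bar>G z 0 (u z)\<bar> + 1"
  have "0 < P" "G z 0 (u z) < G z P (u z)" "G z 0 (u z) < G z (- P) (u z)"
    using C[rule_format, of 0] C[rule_format, of P] C[rule_format, of "- P"]
    by (auto simp: P_def)
  have "\<forall>\<^sub>F w in nhds z. \<forall>p\<in>{- P..P}. 0 < G w p (u w)"
    using pos by (intro eventually_positive_on_compact compact_Icc) auto
  moreover have "\<forall>\<^sub>F w in nhds z. G w 0 (u w) < G w P (u w)"
    "\<forall>\<^sub>F w in nhds z. G w 0 (u w) < G w (- P) (u w)"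
    using eventually_G_less_G \<open>G z 0 (u z) < G z P (u z)\<close> \<open>G z 0 (u z) < G z (- P) (u z)\<close> by auto
  ultimately show ?thesis
  proof eventually_elim
    case (elim w)
    show "\<forall>p. 0 < G w p (u w)"
    proof
      fix p
      consider "p \<in> {- P..P}" | "P < p" | "p < - P"
        by force
      then show "0 < G w p (u w)"
      proof cases
        case 2
        have "G w P (u w) < G w p (u w)"
          using strictly_convex_increasing_right[OF convex_G[of w "u w"], of 0 P p]
            elim(2) \<open>0 < P\<close> 2
          by simp
        moreover have "0 < G w P (u w)" "0 < G w (- P) (u w)"
          using elim(1) \<open>0 < P\<close> by auto
        ultimately show ?thesis
          by linarith
      next
        case 3
        have "G w (- P) (u w) < G w p (u w)"
          using strictly_convex_increasing_left[OF convex_G[of w "u w"], of p "- P" 0]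
            elim(3) \<open>0 < P\<close> 3
          by simp
        moreover have "0 < G w P (u w)" "0 < G w (- P) (u w)"
          using elim(1) \<open>0 < P\<close> by auto
        ultimately show ?thesis
          by linarith
      qed (use elim in auto)
    qed
  qed
qed

text \<open>For the strictly convex function G z \<cdot> (u z), the set of slopes p with G z p (u z) \<le> 0 is a
  nonempty compact interval [slope_lo z, slope_hi z]; its endpoints are the only possible
  one-sided derivatives of u at z.\<close>
definition zero_sublevel :: "real \<Rightarrow> real set" where
  "zero_sublevel z = {p. G z p (u z) \<le> 0}"

definition slope_lo :: "real \<Rightarrow> real" where
  "slope_lo z = Inf (zero_sublevel z)"

definition slope_hi :: "real \<Rightarrow> real" where
  "slope_hi z = Sup (zero_sublevel z)"

lemma zero_sublevel_nonempty: "zero_sublevel z \<noteq> {}"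
proof
  assume "zero_sublevel z = {}"
  then have "\<forall>\<^sub>F w in nhds z. \<forall>p. 0 < G w p (u w)"
    by (intro eventually_positive_if_positive) (auto simp: zero_sublevel_def not_le)
  then obtain r where "r > 0" and r: "\<forall>w. dist w z < r \<longrightarrow> (\<forall>p. 0 < G w p (u w))"
    unfolding eventually_nhds_metric by blast
  then obtain w p where "\<bar>w - z\<bar> < r" "G w p (u w) \<le> 0"
    using nonpositive_somewhere_near by blast
  then show False
    using r by (metis dist_real_def not_le)
qed

lemma zero_sublevel_bounded: "bdd_above (zero_sublevel z)" "bdd_below (zero_sublevel z)"
proof -
  obtain C where C: "\<forall>p. \<bar>p\<bar> - C \<le> G z p (u z)"
    using coercive_G by blast
  then have "\<forall>p\<in>zero_sublevel z. \<bar>p\<bar> \<le> C"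
    unfolding zero_sublevel_def by (smt (verit) mem_Collect_eq)
  then show "bdd_above (zero_sublevel z)" "bdd_below (zero_sublevel z)"
    by (auto intro!: bdd_aboveI[of _ C] bdd_belowI[of _ "- C"] simp: abs_le_iff)
qed

lemma closed_zero_sublevel: "closed (zero_sublevel z)"
  unfolding zero_sublevel_def
  by (rule closed_Collect_le[OF continuous_on_G_u_p continuous_on_const])

lemma G_slope_lo: "G z (slope_lo z) (u z) \<le> 0"
  using closed_contains_Inf[OF zero_sublevel_nonempty zero_sublevel_bounded(2) closed_zero_sublevel]
  by (simp add: slope_lo_def zero_sublevel_def)

lemma G_slope_hi: "G z (slope_hi z) (u z) \<le> 0"
  using closed_contains_Sup[OF zero_sublevel_nonempty zero_sublevel_bounded(1) closed_zero_sublevel]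
  by (simp add: slope_hi_def zero_sublevel_def)

lemma G_nonpos_iff: "G z p (u z) \<le> 0 \<longleftrightarrow> slope_lo z \<le> p \<and> p \<le> slope_hi z"
proof
  assume "G z p (u z) \<le> 0"
  then have "p \<in> zero_sublevel z"
    by (simp add: zero_sublevel_def)
  then show "slope_lo z \<le> p \<and> p \<le> slope_hi z"
    unfolding slope_lo_def slope_hi_def
    using cInf_lower[OF _ zero_sublevel_bounded(2)] cSup_upper[OF _ zero_sublevel_bounded(1)]
    by blast
next
  assume "slope_lo z \<le> p \<and> p \<le> slope_hi z"
  then show "G z p (u z) \<le> 0"
    using strictly_convex_le_max[OF convex_G[of z "u z"], of "slope_lo z" p "slope_hi z"]
      G_slope_lo[of z] G_slope_hi[of z] by (metis max.bounded_iff order_trans)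
qed

lemma slope_lo_le_hi: "slope_lo z \<le> slope_hi z"
  using G_nonpos_iff G_slope_lo by blast

lemma G_neg_between: "slope_lo z < p \<Longrightarrow> p < slope_hi z \<Longrightarrow> G z p (u z) < 0"
  using strictly_convex_less_max[OF convex_G[of z "u z"], of "slope_lo z" p "slope_hi z"]
    G_slope_lo[of z] G_slope_hi[of z] by simp

lemma eventually_G_pos_above:
  assumes "slope_hi z < q"
  shows "\<forall>\<^sub>F w in nhds z. \<forall>p\<ge>q. 0 < G w p (u w)"
proof -
  define p1 where "p1 = (slope_hi z + q) / 2"
  have p1: "slope_hi z < p1" "p1 < q"
    using assms by (auto simp: p1_def)
  then have "0 < G z p1 (u z)"
    using G_nonpos_iff by (meson not_le order.strict_iff_not)
  moreover have "G z (slope_hi z) (u z) \<le> G z p1 (u z)"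
    using G_slope_hi[of z] \<open>0 < G z p1 (u z)\<close> by linarith
  then have "G z p1 (u z) < G z q (u z)"
    using strictly_convex_increasing_right[OF convex_G[of z "u z"], of "slope_hi z" p1 q] p1
    by blast
  ultimately have "\<forall>\<^sub>F w in nhds z. 0 < G w p1 (u w) \<and> G w p1 (u w) < G w q (u w)"
    using eventually_G_greater eventually_G_less_G eventually_conj by blast
  then show ?thesis
  proof (rule eventually_mono, intro allI impI)
    fix w p :: real
    assume "0 < G w p1 (u w) \<and> G w p1 (u w) < G w q (u w)" "q \<le> p"
    then show "0 < G w p (u w)"
      using strictly_convex_increasing_right[OF convex_G[of w "u w"], of p1 q p] p1
      by (cases "p = q") force+
  qed
qed

lemma eventually_G_pos_below:
  assumes "q < slope_lo z"
  shows "\<forall>\<^sub>F w in nhds z. \<forall>p\<le>q. 0 < G w p (u w)"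
proof -
  define p1 where "p1 = (slope_lo z + q) / 2"
  have p1: "p1 < slope_lo z" "q < p1"
    using assms by (auto simp: p1_def)
  then have "0 < G z p1 (u z)"
    using G_nonpos_iff by (meson not_le order.strict_iff_not)
  moreover have "G z (slope_lo z) (u z) \<le> G z p1 (u z)"
    using G_slope_lo[of z] \<open>0 < G z p1 (u z)\<close> by linarith
  then have "G z p1 (u z) < G z q (u z)"
    using strictly_convex_increasing_left[OF convex_G[of z "u z"], of q p1 "slope_lo z"] p1 by blast
  ultimately have "\<forall>\<^sub>F w in nhds z. 0 < G w p1 (u w) \<and> G w p1 (u w) < G w q (u w)"
    using eventually_G_greater eventually_G_less_G eventually_conj by blast
  then show ?thesis
  proof (rule eventually_mono, intro allI impI)
    fix w p :: real
    assume "0 < G w p1 (u w) \<and> G w p1 (u w) < G w q (u w)" "p \<le> q"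
    then show "0 < G w p (u w)"
      using strictly_convex_increasing_left[OF convex_G[of w "u w"], of p q p1] p1
      by (cases "p = q") force+
  qed
qed

lemma eventually_G_neg:
  assumes "slope_lo z < s1" "s1 \<le> s2" "s2 < slope_hi z"
  shows "\<forall>\<^sub>F w in nhds z. \<forall>p\<in>{s1..s2}. G w p (u w) < 0"
proof -
  have "G z s1 (u z) < 0" "G z s2 (u z) < 0"
    using assms G_neg_between by auto
  then have "\<forall>\<^sub>F w in nhds z. G w s1 (u w) < 0 \<and> G w s2 (u w) < 0"
    using eventually_G_less eventually_conj by blast
  then show ?thesis
  proof (rule eventually_mono, intro ballI)
    fix w p
    assume "G w s1 (u w) < 0 \<and> G w s2 (u w) < 0" "p \<in> {s1..s2}"
    then show "G w p (u w) < 0"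
      using strictly_convex_le_max[OF convex_G[of w "u w"], of s1 p s2]
      by (metis atLeastAtMost_iff max_less_iff_conj order.strict_trans1)
  qed
qed

lemma isCont_slope_hi:
  assumes "slope_lo z < slope_hi z"
  shows "isCont slope_hi z"
  unfolding isCont_def
proof (rule order_tendstoI)
  fix a
  assume "a < slope_hi z"
  define s where "s = (max a (slope_lo z) + slope_hi z) / 2"
  have "\<forall>\<^sub>F w in nhds z. \<forall>p\<in>{s..s}. G w p (u w) < 0"
    using assms \<open>a < slope_hi z\<close> by (intro eventually_G_neg) (auto simp: s_def)
  moreover have "a < s"
    using \<open>a < slope_hi z\<close> by (auto simp: s_def)
  ultimately have "\<forall>\<^sub>F w in nhds z. a < slope_hi w"
    by (auto elim!: eventually_mono) (meson G_nonpos_iff less_imp_le order.strict_trans2)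
  then show "\<forall>\<^sub>F w in at z. a < slope_hi w"
    by (rule eventually_at_if_eventually_nhds)
next
  fix a
  assume "slope_hi z < a"
  then have "\<forall>\<^sub>F w in nhds z. \<forall>p\<ge>a. 0 < G w p (u w)"
    by (rule eventually_G_pos_above)
  then have "\<forall>\<^sub>F w in nhds z. slope_hi w < a"
    by (rule eventually_mono) (meson G_slope_hi not_le)
  then show "\<forall>\<^sub>F w in at z. slope_hi w < a"
    by (rule eventually_at_if_eventually_nhds)
qed

lemma isCont_slope_lo:
  assumes "slope_lo z < slope_hi z"
  shows "isCont slope_lo z"
  unfolding isCont_def
proof (rule order_tendstoI)
  fix a
  assume "slope_lo z < a"
  define s where "s = (min a (slope_hi z) + slope_lo z) / 2"
  have "\<forall>\<^sub>F w in nhds z. \<forall>p\<in>{s..s}. G w p (u w) < 0"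
    using assms \<open>slope_lo z < a\<close> by (intro eventually_G_neg) (auto simp: s_def)
  moreover have "s < a"
    using \<open>slope_lo z < a\<close> by (auto simp: s_def)
  ultimately have "\<forall>\<^sub>F w in nhds z. slope_lo w < a"
    by (auto elim!: eventually_mono) (meson G_nonpos_iff less_imp_le order.strict_trans1)
  then show "\<forall>\<^sub>F w in at z. slope_lo w < a"
    by (rule eventually_at_if_eventually_nhds)
next
  fix a
  assume "a < slope_lo z"
  then have "\<forall>\<^sub>F w in nhds z. \<forall>p\<le>a. 0 < G w p (u w)"
    by (rule eventually_G_pos_below)
  then have "\<forall>\<^sub>F w in nhds z. a < slope_lo w"
    by (rule eventually_mono) (meson G_slope_lo not_le)
  then show "\<forall>\<^sub>F w in at z. a < slope_lo w"
    by (rule eventually_at_if_eventually_nhds)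
qed

lemma reflect_slope_lo:
  "convex_viscosity_solution.slope_lo (\<lambda>x p v. G (- x) (- p) v) (\<lambda>x. u (- x)) z = - slope_hi (- z)"
  and reflect_slope_hi:
  "convex_viscosity_solution.slope_hi (\<lambda>x p v. G (- x) (- p) v) (\<lambda>x. u (- x)) z = - slope_lo (- z)"
proof -
  interpret R: convex_viscosity_solution "\<lambda>x p v. G (- x) (- p) v" "\<lambda>x. u (- x)"
    by (rule reflect)
  have "R.slope_lo z \<le> p \<and> p \<le> R.slope_hi z \<longleftrightarrow> - slope_hi (- z) \<le> p \<and> p \<le> - slope_lo (- z)" for p
    using R.G_nonpos_iff[of z p] G_nonpos_iff[of "- z" "- p"] by auto
  then show "R.slope_lo z = - slope_hi (- z)" "R.slope_hi z = - slope_lo (- z)"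
    using R.slope_lo_le_hi slope_lo_le_hi by (smt (verit))+
qed

text \<open>Maximising u minus the parabola q (y - x) + K (y - x)^2 over [x, x + r]: the rise at x + h
  and the size of K at x + r force an interior maximum.\<close>
lemma subsolution_steep_rise:
  assumes r: "0 < r" and M: "\<forall>w\<in>{x..x + r}. \<bar>u w\<bar> \<le> M"
    and h: "0 < h" "h < r" "(2 * M + \<bar>q\<bar> * r + 1) / r^2 * h < \<delta>"
    and rise: "(q + \<delta>) * h < u (x + h) - u x"
  shows "\<exists>w p. x < w \<and> w < x + r \<and> q \<le> p \<and> G w p (u w) \<le> 0"
proof -
  define K where "K = (2 * M + \<bar>q\<bar> * r + 1) / r^2"
  have "\<bar>u x\<bar> \<le> M"
    using M r by simp
  then have "0 \<le> M"
    by (rule order_trans[OF abs_ge_zero])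
  then have "0 < K" and Kr: "K * r^2 = 2 * M + \<bar>q\<bar> * r + 1"
    using r by (auto simp: K_def intro!: divide_pos_pos add_nonneg_pos)
  define \<Phi> where "\<Phi> y = u y - (q * (y - x) + K * (y - x)^2)" for y
  have "continuous_on {x..x + r} \<Phi>"
    unfolding \<Phi>_def by (intro continuous_intros continuous_on_subset[OF continuous_u]) auto
  then obtain w where w: "w \<in> {x..x + r}" "\<And>y. y \<in> {x..x + r} \<Longrightarrow> \<Phi> y \<le> \<Phi> w"
    using continuous_attains_sup[OF compact_Icc, of x "x + r" \<Phi>] r by auto
  have "\<Phi> (x + h) = u (x + h) - q * h - K * h^2"
    by (simp add: \<Phi>_def)
  also have "\<dots> > u x + h * (\<delta> - K * h)"
    using rise by (simp add: algebra_simps power2_eq_square)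
  finally have "u x + h * (\<delta> - K * h) < \<Phi> (x + h)" .
  moreover have "0 < h * (\<delta> - K * h)"
    using h by (simp add: K_def)
  ultimately have "\<Phi> x < \<Phi> (x + h)"
    by (simp add: \<Phi>_def)
  moreover have "\<Phi> (x + r) < \<Phi> x"
  proof -
    have "- (q * r) \<le> \<bar>q\<bar> * r"
      using r mult_right_mono[of "- q" "\<bar>q\<bar>" r] by simp
    moreover have "\<Phi> (x + r) = u (x + r) - q * r - (2 * M + \<bar>q\<bar> * r + 1)"
      by (simp add: \<Phi>_def Kr)
    moreover have "\<Phi> x = u x" "\<bar>u x\<bar> \<le> M" "\<bar>u (x + r)\<bar> \<le> M"
      using M r by (auto simp: \<Phi>_def)
    ultimately show ?thesis
      by (smt (verit))
  qed
  moreover have "\<Phi> (x + h) \<le> \<Phi> w"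
    using w h by auto
  ultimately have "x < w" "w < x + r"
    using w by (smt (verit) atLeastAtMost_iff)+
  then have "local_max_at \<Phi> w"
    using w(2) by (intro local_max_at_interval) auto
  then have "G w (q + 2 * K * (w - x)) (u w) \<le> 0"
    unfolding \<Phi>_def by (rule subsolution_parabola)
  moreover have "q \<le> q + 2 * K * (w - x)"
    using \<open>0 < K\<close> \<open>x < w\<close> by simp
  ultimately show ?thesis
    using \<open>x < w\<close> \<open>w < x + r\<close> by blast
qed

lemma subsolution_steep_drop:
  assumes r: "0 < r" and M: "\<forall>w\<in>{y - r..y}. \<bar>u w\<bar> \<le> M"
    and h: "0 < h" "h < r" "(2 * M + \<bar>q\<bar> * r + 1) / r^2 * h < \<delta>"
    and drop: "(\<delta> - q) * h < u (y - h) - u y"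
  shows "\<exists>w p. y - r < w \<and> w < y \<and> p \<le> q \<and> G w p (u w) \<le> 0"
proof -
  interpret R: convex_viscosity_solution "\<lambda>x p v. G (- x) (- p) v" "\<lambda>x. u (- x)"
    by (rule reflect)
  have "\<forall>w\<in>{- y..- y + r}. \<bar>u (- w)\<bar> \<le> M"
    using M by force
  then obtain w p where "- y < w" "w < - y + r" "- q \<le> p" "G (- w) (- p) (u (- w)) \<le> 0"
    using R.subsolution_steep_rise[of r "- y" M h "- q" \<delta>] r h drop by (auto simp: algebra_simps)
  then show ?thesis
    by (intro exI[of _ "- w"] exI[of _ "- p"]) auto
qed

lemma eventually_right_slope_le:
  assumes "0 < \<delta>"
  shows "\<forall>\<^sub>F y in at_right z. u y - u z \<le> (slope_hi z + \<delta>) * (y - z)"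
proof -
  define q where "q = slope_hi z + \<delta> / 2"
  obtain r0 where "0 < r0" and r0: "\<And>w p. dist w z < r0 \<Longrightarrow> q \<le> p \<Longrightarrow> 0 < G w p (u w)"
    using eventually_G_pos_above[of z q] assms unfolding eventually_nhds_metric q_def by auto
  define r where "r = r0 / 2"
  obtain M where "0 \<le> M" and M: "\<forall>w\<in>{z..z + r}. \<bar>u w\<bar> \<le> M"
    using bounded_on_Icc by blast
  define K where "K = (2 * M + \<bar>q\<bar> * r + 1) / r^2"
  have "0 < r"
    using \<open>0 < r0\<close> by (simp add: r_def)
  then have "0 < K"
    using \<open>0 \<le> M\<close> by (auto simp: K_def intro!: divide_pos_pos add_nonneg_pos)
  show ?thesis
    unfolding eventually_at_right_field
  proof (intro exI[of _ "z + min r (\<delta> / 2 / K)"] conjI allI impI)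
    show "z < z + min r (\<delta> / 2 / K)"
      using \<open>0 < r\<close> \<open>0 < K\<close> assms by simp
    fix y
    assume y: "z < y" "y < z + min r (\<delta> / 2 / K)"
    show "u y - u z \<le> (slope_hi z + \<delta>) * (y - z)"
    proof (rule ccontr)
      assume "\<not> ?thesis"
      then have rise: "(q + \<delta> / 2) * (y - z) < u (z + (y - z)) - u z"
        by (simp add: q_def algebra_simps)
      have "K * (y - z) < K * (\<delta> / 2 / K)"
        using y \<open>0 < K\<close> by (intro mult_strict_left_mono) auto
      then have "K * (y - z) < \<delta> / 2"
        using \<open>0 < K\<close> by simp
      moreover have "0 < y - z" "y - z < r"
        using y by auto
      ultimately obtain w p where "z < w" "w < z + r" "q \<le> p" "G w p (u w) \<le> 0"
        using subsolution_steep_rise[OF \<open>0 < r\<close> M, of "y - z" q "\<delta> / 2"] rise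
        unfolding K_def by blast
      then show False
        using r0[of w p] by (auto simp: dist_real_def r_def)
    qed
  qed
qed

lemma eventually_right_slope_ge:
  assumes "0 < \<delta>"
  shows "\<forall>\<^sub>F y in at_right z. (slope_lo z - \<delta>) * (y - z) \<le> u y - u z"
proof -
  define q where "q = slope_lo z - \<delta> / 2"
  obtain r0 where "0 < r0" and r0: "\<And>w p. dist w z < r0 \<Longrightarrow> p \<le> q \<Longrightarrow> 0 < G w p (u w)"
    using eventually_G_pos_below[of q z] assms unfolding eventually_nhds_metric q_def by auto
  define r where "r = r0 / 2"
  obtain M where "0 \<le> M" and M: "\<forall>w\<in>{z - r..z + r}. \<bar>u w\<bar> \<le> M"
    using bounded_on_Icc by blast
  define K where "K = (2 * M + \<bar>q\<bar> * r + 1) / r^2"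
  have "0 < r"
    using \<open>0 < r0\<close> by (simp add: r_def)
  then have "0 < K"
    using \<open>0 \<le> M\<close> by (auto simp: K_def intro!: divide_pos_pos add_nonneg_pos)
  show ?thesis
    unfolding eventually_at_right_field
  proof (intro exI[of _ "z + min r (\<delta> / 2 / K)"] conjI allI impI)
    show "z < z + min r (\<delta> / 2 / K)"
      using \<open>0 < r\<close> \<open>0 < K\<close> assms by simp
    fix y
    assume y: "z < y" "y < z + min r (\<delta> / 2 / K)"
    show "(slope_lo z - \<delta>) * (y - z) \<le> u y - u z"
    proof (rule ccontr)
      assume "\<not> ?thesis"
      then have drop: "(\<delta> / 2 - q) * (y - z) < u (y - (y - z)) - u y"
        by (simp add: q_def algebra_simps)
      have "K * (y - z) < K * (\<delta> / 2 / K)"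
        using y \<open>0 < K\<close> by (intro mult_strict_left_mono) auto
      then have "K * (y - z) < \<delta> / 2"
        using \<open>0 < K\<close> by simp
      moreover have "\<forall>w\<in>{y - r..y}. \<bar>u w\<bar> \<le> M"
        using M y by auto
      moreover have yz: "0 < y - z" "y - z < r"
        using y by auto
      ultimately obtain w p where "y - r < w" "w < y" "p \<le> q" "G w p (u w) \<le> 0"
        using subsolution_steep_drop[OF \<open>0 < r\<close>, of y M "y - z" q "\<delta> / 2"] drop
        unfolding K_def by blast
      moreover have "dist w z < r0"
        using calculation(1,2) yz by (simp add: dist_real_def abs_less_iff r_def)
      ultimately show False
        using r0[of w p] by auto
    qed
  qed
qed

lemma supersolution_linear:
  assumes "local_min_at (\<lambda>y. u y - s * y) w"
  shows "0 \<le> G w s (u w)"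
  using supersolution_parabola[of s 0 0 w] assms by simp

definition right_chords_le :: "real \<Rightarrow> real \<Rightarrow> bool" where
  "right_chords_le z c \<longleftrightarrow> (\<exists>b>z. \<forall>x y. z \<le> x \<longrightarrow> x < y \<longrightarrow> y < b \<longrightarrow> u y - u x \<le> c * (y - x))"

lemma right_chords_le_mono: "right_chords_le z c \<Longrightarrow> c \<le> c' \<Longrightarrow> right_chords_le z c'"
  unfolding right_chords_le_def by (smt (verit) mult_right_mono)

definition dips_below :: "real \<Rightarrow> real \<Rightarrow> bool" where
  "dips_below z s \<longleftrightarrow> (\<exists>\<^sub>F y in at_right z. u y - u z < s * (y - z))"

lemma dips_below_mono: "dips_below z s \<Longrightarrow> s \<le> s' \<Longrightarrow> dips_below z s'"
  unfolding dips_below_def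
  by (erule frequently_rev_mp, rule eventually_mono[OF eventually_at_right_less])
    (smt (verit) mult_right_mono)

lemma not_dips_below:
  "\<not> dips_below z s \<longleftrightarrow> (\<forall>\<^sub>F y in at_right z. s * (y - z) \<le> u y - u z)"
  unfolding dips_below_def not_frequently by (simp add: not_less)

text \<open>Where G w s (u w) < 0, the supersolution property forbids local minima of u y - s y.\<close>
lemma quasiconcave_near:
  assumes "slope_lo z < s" "s < slope_hi z"
  shows "\<exists>r>0. \<forall>x y w. x < y \<longrightarrow> y < w \<longrightarrow> \<bar>x - z\<bar> < r \<longrightarrow> \<bar>w - z\<bar> < r \<longrightarrow>
    min (u x - s * x) (u w - s * w) \<le> u y - s * y"
proof -
  obtain r where "0 < r" and r: "\<And>w. dist w z < r \<Longrightarrow> G w s (u w) < 0"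
    using eventually_G_neg[of z s s] assms unfolding eventually_nhds_metric by auto
  define g where "g y = u y - s * y" for y
  have "min (g x) (g w) \<le> g y"
    if xyw: "x < y" "y < w" "\<bar>x - z\<bar> < r" "\<bar>w - z\<bar> < r" for x y w
  proof (rule ccontr)
    assume less: "\<not> min (g x) (g w) \<le> g y"
    have "continuous_on {x..w} g"
      unfolding g_def by (intro continuous_intros continuous_on_subset[OF continuous_u]) auto
    then obtain m where m: "m \<in> {x..w}" "\<And>y. y \<in> {x..w} \<Longrightarrow> g m \<le> g y"
      using continuous_attains_inf[OF compact_Icc, of x w g] xyw by auto
    moreover have "g m \<le> g y"
      using m(2) xyw by auto
    ultimately have "g m < min (g x) (g w)"
      using less by (simp add: not_le)
    then have "x < m" "m < w"
      using m by (auto simp: less_le)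
    then have "0 \<le> G m s (u m)"
      using m(2) by (intro supersolution_linear local_min_at_interval[of x m w]) (auto simp: g_def)
    moreover have "dist m z < r"
      using \<open>x < m\<close> \<open>m < w\<close> xyw by (auto simp: dist_real_def abs_less_iff)
    ultimately show False
      using r by force
  qed
  then show ?thesis
    using \<open>0 < r\<close> unfolding g_def by blast
qed

text \<open>A function without interior minima near z that dips below its value at z arbitrarily close
  to the right of z must be nonincreasing there.\<close>
lemma right_chords_le_if_dips:
  assumes "slope_lo z < s" "s < slope_hi z"
    and dips: "dips_below z s"
  shows "right_chords_le z s"
proof -
  obtain r where "0 < r" and r: "\<And>x y w. x < y \<Longrightarrow> y < w \<Longrightarrow> \<bar>x - z\<bar> < r \<Longrightarrow> \<bar>w - z\<bar> < r \<Longrightarrow>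
      min (u x - s * x) (u w - s * w) \<le> u y - s * y"
    using quasiconcave_near assms(1,2) by blast
  define g where "g y = u y - s * y" for y
  have dip: "\<exists>y0. z < y0 \<and> y0 < c \<and> g y0 < g z" if "z < c" for c
  proof -
    have "\<exists>\<^sub>F y in at_right z. y \<in> {z<..<c} \<and> u y - u z < s * (y - z)"
      using frequently_eventually_conj[OF dips[unfolded dips_below_def]
          eventually_at_right_real[OF that]] .
    then show ?thesis
      by (auto simp: g_def algebra_simps dest!: frequently_ex)
  qed
  have "g y \<le> g x" if xy: "z \<le> x" "x < y" "y < z + r" for x y
  proof (rule ccontr)
    assume "\<not> g y \<le> g x"
    show False
    proof (cases "x = z")
      case True
      obtain y0 where "z < y0" "y0 < y" "g y0 < g z"
        using dip[of y] xy by auto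
      then show False
        using r[of z y0 y] xy \<open>0 < r\<close> \<open>\<not> g y \<le> g x\<close> True by (auto simp: g_def)
    next
      case False
      obtain y0 where "z < y0" "y0 < x" "g y0 < g z"
        using dip[of x] xy False by auto
      then have "g y < g z"
        using r[of z y0 y] xy \<open>0 < r\<close> by (fastforce simp: g_def)
      then show False
        using r[of z x y] xy False \<open>0 < r\<close> \<open>\<not> g y \<le> g x\<close> by (auto simp: g_def)
    qed
  qed
  then show ?thesis
    unfolding right_chords_le_def using \<open>0 < r\<close>
    by (intro exI[of _ "z + r"]) (auto simp: g_def algebra_simps)
qed

text \<open>A concave parabola of curvature 4 \<eta> / (h / 2), centred at the midpoint z + h / 2, touches u
  from below inside (z, z + h) with slope within 8 \<eta> of r.\<close>
lemma supersolution_chord_midpoint: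
  assumes "0 < h" "0 < \<eta>"
    and neg: "\<forall>w\<in>{z..z + h}. \<forall>p\<in>{r - 8 * \<eta>..r + 8 * \<eta>}. G w p (u w) < 0"
    and chord: "(r - \<eta>) * h \<le> u (z + h) - u z"
  shows "(r + \<eta>) * (h / 2) < u (z + h / 2) - u z"
proof (rule ccontr)
  assume "\<not> ?thesis"
  then have half: "u (z + h / 2) - u z \<le> (r + \<eta>) * (h / 2)"
    by simp
  define \<rho> where "\<rho> = h / 2"
  define m where "m = z + \<rho>"
  define K where "K = 4 * \<eta> / \<rho>"
  have "0 < \<rho>" "h = 2 * \<rho>" and K\<rho>: "K * \<rho> = 4 * \<eta>"
    using assms by (auto simp: \<rho>_def K_def)
  define \<Phi> where "\<Phi> w = u w - (r * (w - m) + (- K) * (w - m)^2)" for w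
  have "\<Phi> (z + h) - \<Phi> m = (u (z + h) - u z) - (u m - u z) - r * \<rho> + (K * \<rho>) * \<rho>"
    by (simp add: \<Phi>_def m_def \<open>h = 2 * \<rho>\<close> power2_eq_square algebra_simps)
  also have "\<dots> \<ge> (r - \<eta>) * h - (r + \<eta>) * \<rho> - r * \<rho> + (4 * \<eta>) * \<rho>"
    using chord half K\<rho> by (simp add: m_def \<rho>_def)
  finally have right: "\<Phi> m < \<Phi> (z + h)"
    using \<open>0 < \<rho>\<close> \<open>0 < \<eta>\<close> \<open>h = 2 * \<rho>\<close> by (simp add: algebra_simps) (smt (verit) mult_pos_pos)
  have "\<Phi> z - \<Phi> m = - (u m - u z) + r * \<rho> + (K * \<rho>) * \<rho>"
    by (simp add: \<Phi>_def m_def power2_eq_square algebra_simps)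
  also have "\<dots> \<ge> - ((r + \<eta>) * \<rho>) + r * \<rho> + (4 * \<eta>) * \<rho>"
    using half K\<rho> by (simp add: m_def \<rho>_def)
  finally have left: "\<Phi> m < \<Phi> z"
    using \<open>0 < \<rho>\<close> \<open>0 < \<eta>\<close> by (simp add: algebra_simps) (smt (verit) mult_pos_pos)
  have "continuous_on {z..z + h} \<Phi>"
    unfolding \<Phi>_def by (intro continuous_intros continuous_on_subset[OF continuous_u]) auto
  then obtain w where w: "w \<in> {z..z + h}" "\<And>y. y \<in> {z..z + h} \<Longrightarrow> \<Phi> w \<le> \<Phi> y"
    using continuous_attains_inf[OF compact_Icc, of z "z + h" \<Phi>] \<open>0 < h\<close> by auto
  have "m \<in> {z..z + h}"
    using \<open>0 < \<rho>\<close> \<open>h = 2 * \<rho>\<close> by (simp add: m_def)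
  then have "z < w" "w < z + h"
    using w left right by (smt (verit) atLeastAtMost_iff)+
  then have super: "0 \<le> G w (r + 2 * (- K) * (w - m)) (u w)"
    using w(2) unfolding \<Phi>_def
    by (intro supersolution_parabola local_min_at_interval[of z w "z + h"]) auto
  have "\<bar>w - m\<bar> \<le> \<rho>"
    using \<open>z < w\<close> \<open>w < z + h\<close> \<open>h = 2 * \<rho>\<close> by (simp add: m_def abs_le_iff)
  moreover have "0 \<le> K"
    using \<open>0 < \<rho>\<close> \<open>0 < \<eta>\<close> by (simp add: K_def)
  ultimately have "\<bar>2 * K * (w - m)\<bar> \<le> 2 * K * \<rho>"
    by (simp add: abs_mult mult_left_mono)
  then have "\<bar>2 * K * (w - m)\<bar> \<le> 8 * \<eta>"
    using K\<rho> by simp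
  then have "r + 2 * (- K) * (w - m) \<in> {r - 8 * \<eta>..r + 8 * \<eta>}"
    by (simp add: abs_le_iff)
  then show False
    using super neg w(1) by (meson not_le)
qed

lemma slope_lo_less_hi_if_dips_below:
  assumes "s < slope_hi z" "dips_below z s"
  shows "slope_lo z < slope_hi z"
proof (rule ccontr)
  assume "\<not> ?thesis"
  then have "slope_lo z = slope_hi z"
    using slope_lo_le_hi by (meson order.not_eq_order_implies_strict)
  then have "\<not> dips_below z s"
    using eventually_right_slope_ge[of "slope_lo z - s" z] assms(1) by (simp add: not_dips_below)
  then show False
    using assms(2) by blast
qed

text \<open>The infimum r of the slopes below which u dips must be slope_lo z: otherwise u would have
  chords of slope about r both from z and from points just right of z, which
  supersolution_chord_midpoint rules out.\<close>
lemma right_chords_le_if_dips_below: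
  assumes "s0 < slope_hi z" "dips_below z s0" "slope_lo z < c"
  shows "right_chords_le z c"
proof -
  define T where "T = {s. slope_lo z < s \<and> s < slope_hi z \<and> dips_below z s}"
  define s1 where "s1 = (max s0 (slope_lo z) + slope_hi z) / 2"
  have "slope_lo z < slope_hi z"
    using slope_lo_less_hi_if_dips_below assms(1,2) .
  then have "s1 \<in> T"
    using assms(1) dips_below_mono[OF assms(2), of s1] by (auto simp: T_def s1_def)
  have "bdd_below T"
    by (auto simp: T_def intro: bdd_belowI[of _ "slope_lo z"])
  define r where "r = Inf T"
  have "slope_lo z \<le> r" "r < slope_hi z"
    using \<open>s1 \<in> T\<close> cInf_lower[OF \<open>s1 \<in> T\<close> \<open>bdd_below T\<close>]
    by (auto simp: r_def T_def intro!: cInf_greatest)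
  have up: "right_chords_le z c'" if "r < c'" for c'
  proof -
    have "Inf T < c'"
      using that by (simp add: r_def)
    then obtain s where "s \<in> T" "s < c'"
      using cInf_less_iff[OF _ \<open>bdd_below T\<close>] \<open>s1 \<in> T\<close> by blast
    moreover from \<open>s \<in> T\<close> have "right_chords_le z s"
      by (auto simp: T_def intro: right_chords_le_if_dips)
    ultimately show ?thesis
      by (meson right_chords_le_mono less_imp_le)
  qed
  have "r = slope_lo z"
  proof (rule ccontr)
    assume "r \<noteq> slope_lo z"
    then have "slope_lo z < r"
      using \<open>slope_lo z \<le> r\<close> by simp
    define \<eta> where "\<eta> = min (r - slope_lo z) (slope_hi z - r) / 16"
    have "0 < 16 * \<eta>" "16 * \<eta> \<le> r - slope_lo z" "16 * \<eta> \<le> slope_hi z - r"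
      using \<open>slope_lo z < r\<close> \<open>r < slope_hi z\<close> by (auto simp: \<eta>_def)
    then have \<eta>: "0 < \<eta>" "slope_lo z < r - 8 * \<eta>" "r + 8 * \<eta> < slope_hi z" "slope_lo z < r - \<eta>"
      by linarith+
    obtain t1 where "0 < t1"
      and t1: "\<forall>w. dist w z < t1 \<longrightarrow> (\<forall>p\<in>{r - 8 * \<eta>..r + 8 * \<eta>}. G w p (u w) < 0)"
      using eventually_G_neg[of z "r - 8 * \<eta>" "r + 8 * \<eta>"] \<eta> unfolding eventually_nhds_metric
      by auto
    obtain b2 where "z < b2" and b2: "\<forall>x y. z \<le> x \<longrightarrow> x < y \<longrightarrow> y < b2 \<longrightarrow> u y - u x \<le> (r + \<eta>) * (y - x)"
      using up[of "r + \<eta>"] \<eta> unfolding right_chords_le_def by auto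
    have "r - \<eta> \<notin> T"
      using cInf_lower[of "r - \<eta>" T] \<open>bdd_below T\<close> \<eta> by (auto simp: r_def)
    then have "\<not> dips_below z (r - \<eta>)"
      using \<eta> \<open>r < slope_hi z\<close> by (auto simp: T_def)
    then obtain b3 where "z < b3" and b3: "\<forall>y. z < y \<longrightarrow> y < b3 \<longrightarrow> (r - \<eta>) * (y - z) \<le> u y - u z"
      unfolding not_dips_below eventually_at_right_field by auto
    define h where "h = min t1 (min (b2 - z) (b3 - z)) / 2"
    have "0 < 2 * h" "2 * h \<le> t1" "2 * h \<le> b2 - z" "2 * h \<le> b3 - z"
      using \<open>0 < t1\<close> \<open>z < b2\<close> \<open>z < b3\<close> by (auto simp: h_def)
    then have h: "0 < h" "h < t1" "z + h < b2" "z + h < b3"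
      by linarith+
    have "(r + \<eta>) * (h / 2) < u (z + h / 2) - u z"
    proof (rule supersolution_chord_midpoint[OF h(1) \<eta>(1)])
      show "\<forall>w\<in>{z..z + h}. \<forall>p\<in>{r - 8 * \<eta>..r + 8 * \<eta>}. G w p (u w) < 0"
        using t1 h by (auto simp: dist_real_def)
      show "(r - \<eta>) * h \<le> u (z + h) - u z"
        using b3[rule_format, of "z + h"] h by simp
    qed
    moreover have "u (z + h / 2) - u z \<le> (r + \<eta>) * (h / 2)"
      using b2[rule_format, of z "z + h / 2"] h by auto
    ultimately show False
      by simp
  qed
  then show ?thesis
    using up assms(3) by simp
qed

lemma has_right_derivative_slope_lo_if_dips_below:
  assumes "s0 < slope_hi z" "dips_below z s0"
  shows "(u has_real_derivative slope_lo z) (at_right z)"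
proof (rule has_real_derivative_at_right_if_bounds)
  fix a
  assume "a < slope_lo z"
  then show "\<forall>\<^sub>F y in at_right z. a * (y - z) \<le> u y - u z"
    using eventually_right_slope_ge[of "slope_lo z - a" z] by simp
next
  fix a
  assume "slope_lo z < a"
  then obtain b where "z < b" and b: "\<forall>x y. z \<le> x \<longrightarrow> x < y \<longrightarrow> y < b \<longrightarrow> u y - u x \<le> a * (y - x)"
    using right_chords_le_if_dips_below[OF assms] unfolding right_chords_le_def by blast
  then show "\<forall>\<^sub>F y in at_right z. u y - u z \<le> a * (y - z)"
    unfolding eventually_at_right_field by auto
qed

lemma right_derivative_cases:
  "(u has_real_derivative slope_lo z) (at_right z) \<or>
    (u has_real_derivative slope_hi z) (at_right z)"
proof (cases "\<exists>s0 < slope_hi z. dips_below z s0")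
  case True
  then show ?thesis
    using has_right_derivative_slope_lo_if_dips_below by blast
next
  case False
  have "(u has_real_derivative slope_hi z) (at_right z)"
  proof (rule has_real_derivative_at_right_if_bounds)
    fix a
    assume "a < slope_hi z"
    then show "\<forall>\<^sub>F y in at_right z. a * (y - z) \<le> u y - u z"
      using False by (simp add: not_dips_below)
  next
    fix a
    assume "slope_hi z < a"
    then show "\<forall>\<^sub>F y in at_right z. u y - u z \<le> a * (y - z)"
      using eventually_right_slope_le[of "a - slope_hi z" z] by simp
  qed
  then show ?thesis ..
qed

lemma left_derivative_cases:
  "(u has_real_derivative slope_lo z) (at_left z) \<or> (u has_real_derivative slope_hi z) (at_left z)"
proof -
  interpret R: convex_viscosity_solution "\<lambda>x p v. G (- x) (- p) v" "\<lambda>x. u (- x)"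
    by (rule reflect)
  have "((\<lambda>x. u (- x)) has_real_derivative - slope_hi z) (at_right (- z)) \<or>
      ((\<lambda>x. u (- x)) has_real_derivative - slope_lo z) (at_right (- z))"
    using R.right_derivative_cases[of "- z"] by (simp add: reflect_slope_lo reflect_slope_hi)
  then show ?thesis
    by (metis has_real_derivative_at_left_reflect minus_minus)
qed

text \<open>A convex corner would let a line of intermediate slope touch u from below at z.\<close>
lemma no_convex_corner:
  assumes "slope_lo z < slope_hi z" "(u has_real_derivative slope_lo z) (at_left z)"
  shows "\<not> (u has_real_derivative slope_hi z) (at_right z)"
proof
  assume right: "(u has_real_derivative slope_hi z) (at_right z)"
  define s where "s = (slope_lo z + slope_hi z) / 2"
  have "s < slope_hi z" "slope_lo z < s"
    using assms(1) by (auto simp: s_def)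
  then have "\<forall>\<^sub>F y in at_right z. s * (y - z) < u y - u z"
    using eventually_greater_if_has_real_derivative_at_right[OF right] by blast
  moreover have "\<forall>\<^sub>F y in at_left z. s * (y - z) < u y - u z"
  proof -
    have "\<forall>\<^sub>F y in at_left z. (u y - u z) / (y - z) < s \<and> y \<in> {z - 1<..<z}"
      using assms(2) \<open>slope_lo z < s\<close> unfolding has_field_derivative_iff
      by (intro eventually_conj order_tendstoD(2) eventually_at_left_real) auto
    then show ?thesis
      by (rule eventually_mono) (auto simp: neg_divide_less_eq)
  qed
  ultimately have "\<forall>\<^sub>F y in at z. u z - s * z \<le> u y - s * y"
    unfolding eventually_at_split by (auto elim!: eventually_mono simp: algebra_simps)
  then have "0 \<le> G z s (u z)"
    by (intro supersolution_linear local_min_at_if_eventually)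
  moreover have "G z s (u z) < 0"
    using \<open>slope_lo z < s\<close> \<open>s < slope_hi z\<close> by (rule G_neg_between)
  ultimately show False
    by simp
qed

lemma has_derivative_if_degenerate:
  "slope_lo z = slope_hi z \<Longrightarrow> (u has_real_derivative slope_lo z) (at z)"
  using right_derivative_cases left_derivative_cases has_real_derivative_at_left_right by metis

lemma has_derivative_slope_lo_if_chords_le:
  assumes "c < slope_hi w" "a < w" "w < b"
    and chords: "\<And>x y. a \<le> x \<Longrightarrow> x < y \<Longrightarrow> y < b \<Longrightarrow> u y - u x \<le> c * (y - x)"
  shows "(u has_real_derivative slope_lo w) (at w)"
proof -
  have "\<not> (u has_real_derivative slope_hi w) (at_right w)"
  proof
    assume "(u has_real_derivative slope_hi w) (at_right w)"
    then have "\<forall>\<^sub>F y in at_right w. c * (y - w) < u y - u w \<and> y \<in> {w<..<b}"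
      using assms(1,3) by (intro eventually_conj eventually_greater_if_has_real_derivative_at_right
          eventually_at_right_real)
    then obtain y where "c * (y - w) < u y - u w" "w < y" "y < b"
      using eventually_happens'[OF trivial_limit_at_right_real] by fastforce
    then show False
      using chords[of w y] \<open>a < w\<close> by simp
  qed
  moreover have "\<not> (u has_real_derivative slope_hi w) (at_left w)"
  proof
    assume "(u has_real_derivative slope_hi w) (at_left w)"
    then have "\<forall>\<^sub>F y in at_left w. c < (u y - u w) / (y - w) \<and> y \<in> {a<..<w}"
      using assms(1,2) unfolding has_field_derivative_iff
      by (intro eventually_conj order_tendstoD(1) eventually_at_left_real)
    then obtain y where "c < (u y - u w) / (y - w)" "a < y" "y < w"
      using eventually_happens'[OF trivial_limit_at_left_real] by fastforce
    then have "c * (w - y) < u w - u y"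
      by (simp add: neg_less_divide_eq algebra_simps)
    moreover have "u w - u y \<le> c * (w - y)"
      using chords[of y w] \<open>a < y\<close> \<open>y < w\<close> \<open>w < b\<close> by simp
    ultimately show False
      by simp
  qed
  ultimately show ?thesis
    using right_derivative_cases left_derivative_cases has_real_derivative_at_left_right by metis
qed

lemma has_derivative_slope_lo_just_right_of:
  assumes nondeg: "\<And>w. slope_lo w < slope_hi w"
    and right: "(u has_real_derivative slope_lo z) (at_right z)"
  shows "\<exists>b>z. \<forall>w\<in>{z<..<b}. (u has_real_derivative slope_lo w) (at w)"
proof -
  define c where "c = slope_lo z + (slope_hi z - slope_lo z) / 3"
  have c: "slope_lo z < c" "c < slope_hi z"
    using nondeg[of z] by (auto simp: c_def field_simps)
  have "dips_below z c"
    unfolding dips_below_def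
    using eventually_less_if_has_real_derivative_at_right[OF right c(1)]
    by (simp add: eventually_frequently)
  then obtain b1 where "z < b1"
    and b1: "\<And>x y. z \<le> x \<Longrightarrow> x < y \<Longrightarrow> y < b1 \<Longrightarrow> u y - u x \<le> c * (y - x)"
    using right_chords_le_if_dips_below[OF c(2) _ c(1)] unfolding right_chords_le_def by blast
  have "\<forall>\<^sub>F w in at z. c < slope_hi w"
    using isCont_slope_hi[OF nondeg] c(2) unfolding isCont_def by (rule order_tendstoD(1))
  then obtain b2 where "z < b2" and b2: "\<And>w. z < w \<Longrightarrow> w < b2 \<Longrightarrow> c < slope_hi w"
    unfolding eventually_at_split eventually_at_right_field by blast
  show ?thesis
  proof (intro exI[of _ "min b1 b2"] conjI ballI)
    show "z < min b1 b2"
      using \<open>z < b1\<close> \<open>z < b2\<close> by simp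
    fix w
    assume "w \<in> {z<..<min b1 b2}"
    then show "(u has_real_derivative slope_lo w) (at w)"
      using b1 b2 by (intro has_derivative_slope_lo_if_chords_le[of c w z b1]) auto
  qed
qed

text \<open>The infimum S of the points right of z0 where this fails has left derivative slope_lo S,
  hence also right derivative slope_lo S (there is no convex corner), so the property extends
  beyond S.\<close>
lemma has_derivative_slope_lo_right_of:
  assumes nondeg: "\<And>z. slope_lo z < slope_hi z"
    and z0: "(u has_real_derivative slope_lo z0) (at_right z0)" and "z0 < y"
  shows "(u has_real_derivative slope_lo y) (at y)"
proof (rule ccontr)
  assume bad: "\<not> ?thesis"
  define N where "N = {w. z0 < w \<and> \<not> (u has_real_derivative slope_lo w) (at w)}"
  have "y \<in> N"
    using \<open>z0 < y\<close> bad by (simp add: N_def)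
  obtain b0 where "z0 < b0" and b0: "\<And>w. w \<in> {z0<..<b0} \<Longrightarrow> (u has_real_derivative slope_lo w) (at w)"
    using has_derivative_slope_lo_just_right_of[OF nondeg z0] by blast
  then have N_ge: "b0 \<le> w" if "w \<in> N" for w
    using that by (force simp: N_def not_less[symmetric])
  have "bdd_below N"
    using N_ge by (rule bdd_belowI)
  define S where "S = Inf N"
  have "b0 \<le> S"
    unfolding S_def using \<open>y \<in> N\<close> N_ge by (intro cInf_greatest) auto
  have below_S: "(u has_real_derivative slope_lo w) (at w)" if "w \<in> {z0<..<S}" for w
    using that cInf_lower[OF _ \<open>bdd_below N\<close>, of w] by (force simp: N_def S_def)
  have left: "(u has_real_derivative slope_lo S) (at_left S)"
  proof (rule has_real_derivative_at_left_if_deriv_tendsto[OF continuous_u _ below_S])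
    show "z0 < S"
      using \<open>z0 < b0\<close> \<open>b0 \<le> S\<close> by simp
    show "(slope_lo \<longlongrightarrow> slope_lo S) (at_left S)"
      using isCont_slope_lo[OF nondeg] unfolding isCont_def
      by (rule filterlim_at_split[THEN iffD1, THEN conjunct1])
  qed
  then have "(u has_real_derivative slope_lo S) (at_right S)"
    using right_derivative_cases no_convex_corner[OF nondeg] by blast
  then obtain b1 where "S < b1"
    and b1: "\<And>w. w \<in> {S<..<b1} \<Longrightarrow> (u has_real_derivative slope_lo w) (at w)"
    using has_derivative_slope_lo_just_right_of[OF nondeg] by blast
  have "b1 \<le> w" if "w \<in> N" for w
  proof -
    have "S \<le> w"
      unfolding S_def using that \<open>bdd_below N\<close> by (rule cInf_lower)
    moreover have "w \<noteq> S"
      using that left \<open>(u has_real_derivative slope_lo S) (at_right S)\<close>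
      by (auto simp: N_def intro: has_real_derivative_at_left_right)
    ultimately show ?thesis
      using that b1 by (force simp: N_def not_less[symmetric])
  qed
  then have "b1 \<le> S"
    unfolding S_def using \<open>y \<in> N\<close> by (intro cInf_greatest) auto
  then show False
    using \<open>S < b1\<close> by simp
qed

lemma slope_lo_periodic:
  assumes "\<And>x p v. G (x + 1) p v = G x p v" "\<And>x. u (x + 1) = u x"
  shows "slope_lo (x + 1) = slope_lo x"
  using assms by (simp add: slope_lo_def zero_sublevel_def)

text \<open>Periodicity is essential: without it, u could follow slope_hi on a left half-line and
  slope_lo to the right of a concave corner.\<close>
theorem derivative_slope_lo_or_slope_hi:
  assumes nondeg: "\<And>z. slope_lo z < slope_hi z"
    and periodic_G: "\<And>x p v. G (x + 1) p v = G x p v" and periodic_u: "\<And>x. u (x + 1) = u x"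
  shows "(\<forall>z. (u has_real_derivative slope_lo z) (at z)) \<or>
    (\<forall>z. (u has_real_derivative slope_hi z) (at z))"
proof (cases "\<exists>z0. (u has_real_derivative slope_lo z0) (at_right z0)")
  case True
  then obtain z0 where z0: "(u has_real_derivative slope_lo z0) (at_right z0)"
    by blast
  have "(u has_real_derivative slope_lo z) (at z)" for z
  proof -
    obtain n :: nat where "z0 - z < real n"
      using reals_Archimedean2 by blast
    then have "(u has_real_derivative slope_lo (z + real n)) (at (z + real n))"
      by (intro has_derivative_slope_lo_right_of[OF nondeg z0]) simp
    moreover have "slope_lo (z + real n) = slope_lo z" "(\<lambda>x. u (x + real n)) = u"
      using periodic_shift_nat[of slope_lo] periodic_shift_nat[of u] slope_lo_periodic periodic_G
        periodic_u
      by auto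
    ultimately show ?thesis
      using DERIV_shift[of u "slope_lo z" z "real n"] by simp
  qed
  then show ?thesis
    by blast
next
  case False
  have "(u has_real_derivative slope_hi z) (at z)" for z
  proof -
    have right: "(u has_real_derivative slope_hi z) (at_right z)"
      using False right_derivative_cases by blast
    then have "(u has_real_derivative slope_hi z) (at_left z)"
      using left_derivative_cases no_convex_corner[OF nondeg] by blast
    then show ?thesis
      using right has_real_derivative_at_left_right by blast
  qed
  then show ?thesis
    by blast
qed

lemma equation_if_C1:
  assumes deriv: "\<And>z. (u has_real_derivative c z) (at z)" and "continuous_on UNIV c"
  shows "G z (c z) (u z) = 0"
proof -
  have C1: "u C1_differentiable_on UNIV"
    unfolding C1_differentiable_on_def using assms
    by (auto simp: has_real_derivative_iff_has_vector_derivative[symmetric] intro!: exI[of _ c])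
  have "local_max_at (\<lambda>y. u y - u y) z" "local_min_at (\<lambda>y. u y - u y) z"
    by (auto simp: local_max_at_def local_min_at_def intro: exI[of _ 1])
  then have "G z (deriv u z) (u z) \<le> 0" "0 \<le> G z (deriv u z) (u z)"
    using subsolution[OF C1] supersolution[OF C1] by auto
  moreover have "deriv u z = c z"
    using deriv by (rule DERIV_imp_deriv)
  ultimately show ?thesis
    by simp
qed

end

section \<open>Smooth Hamiltonians\<close>

lemma smooth_fun_has_derivative:
  fixes f :: "'a::real_normed_vector \<Rightarrow> real"
  assumes "smooth_fun f"
  obtains f' where "\<And>z. (f has_derivative f' z) (at z)" "\<And>v z. (\<lambda>z. f' z v) differentiable (at z)"
proof -
  have "Ck 2 f"
    using assms by (simp add: smooth_fun_def)
  then obtain f' where "\<forall>z. (f has_derivative f' z) (at z)" and "\<forall>v. Ck 1 (\<lambda>z. f' z v)"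
    by (auto simp: numeral_2_eq_2)
  moreover have "(\<lambda>z. f' z v) differentiable (at z)" if "Ck 1 (\<lambda>z. f' z v)" for v z
    using that by (auto simp: differentiable_def)
  ultimately show ?thesis
    using that by blast
qed

lemma has_real_derivative_along_line:
  fixes f :: "'a::real_normed_vector \<Rightarrow> real"
  assumes "(f has_derivative f') (at (a + s *\<^sub>R v))"
  shows "((\<lambda>\<theta>. f (a + \<theta> *\<^sub>R v)) has_real_derivative f' v) (at s)"
proof -
  have "((\<lambda>\<theta>. a + \<theta> *\<^sub>R v) has_derivative (\<lambda>h. h *\<^sub>R v)) (at s)"
    by (auto intro!: derivative_eq_intros)
  from diff_chain_at[OF this assms]
  have "((\<lambda>\<theta>. f (a + \<theta> *\<^sub>R v)) has_derivative (\<lambda>h. f' (h *\<^sub>R v))) (at s)"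
    by (simp add: o_def)
  moreover have "f' (h *\<^sub>R v) = f' v * h" for h
    using linear_scale[OF has_derivative_linear[OF assms]] by simp
  ultimately show ?thesis
    by (simp add: has_field_derivative_def)
qed

lemma uniformly_small_increment:
  fixes g :: "'a::metric_space \<Rightarrow> real \<Rightarrow> real"
  assumes "compact K" "continuous_on (K \<times> {-1..1}) (\<lambda>z. g (fst z) (snd z))" "0 < \<epsilon>"
  shows "\<exists>\<eta>>0. \<forall>x\<in>K. \<forall>e. \<bar>e\<bar> \<le> \<eta> \<longrightarrow> \<bar>g x e - g x 0\<bar> < \<epsilon>"
proof -
  have "uniformly_continuous_on (K \<times> {-1..1}) (\<lambda>z. g (fst z) (snd z))"
    using assms(1,2) by (intro compact_uniformly_continuous compact_Times compact_Icc)
  then obtain \<eta>0 where "0 < \<eta>0" and \<eta>0: "\<forall>a\<in>K \<times> {-1..1}. \<forall>b\<in>K \<times> {-1..1}.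
      dist b a < \<eta>0 \<longrightarrow> dist (g (fst b) (snd b)) (g (fst a) (snd a)) < \<epsilon>"
    unfolding uniformly_continuous_on_def using assms(3) by fastforce
  show ?thesis
  proof (intro exI[of _ "min 1 (\<eta>0 / 2)"] conjI ballI allI impI)
    show "0 < min 1 (\<eta>0 / 2)"
      using \<open>0 < \<eta>0\<close> by simp
    fix x e
    assume "x \<in> K" "\<bar>e\<bar> \<le> min 1 (\<eta>0 / 2)"
    then show "\<bar>g x e - g x 0\<bar> < \<epsilon>"
      using \<eta>0[rule_format, of "(x, 0)" "(x, e)"] \<open>0 < \<eta>0\<close>
      by (auto simp: dist_Pair_Pair dist_real_def abs_le_iff)
  qed
qed

context
  fixes H :: "real \<Rightarrow> real \<Rightarrow> real \<Rightarrow> real"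
  assumes H_smooth: "smooth_fun (\<lambda>(x, p, u). H x p u)"
begin

lemma smooth_H_derivative:
  "\<exists>H'. (\<forall>z. ((\<lambda>(x, p, u). H x p u) has_derivative H' z) (at z)) \<and>
     (\<forall>w z. (\<lambda>z. H' z w) differentiable (at z)) \<and>
     (\<forall>x p v. Hp H x p v = H' (x, p, v) (0, 1, 0)) \<and> (\<forall>x p v. Hu H x p v = H' (x, p, v) (0, 0, 1))"
proof -
  obtain H' where H': "\<And>z. ((\<lambda>(x, p, u). H x p u) has_derivative H' z) (at z)"
    and H'_diff: "\<And>w z. (\<lambda>z. H' z w) differentiable (at z)"
    using smooth_fun_has_derivative[OF H_smooth] by blast
  have "((\<lambda>q. H x q v) has_real_derivative H' (x, p, v) (0, 1, 0)) (at p)" for x p v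
    using has_real_derivative_along_line[OF H'[of "(x, 0, v) + p *\<^sub>R (0, 1, 0)"]] by simp
  then have Hp: "Hp H x p v = H' (x, p, v) (0, 1, 0)" for x p v
    unfolding Hp_def by (rule DERIV_imp_deriv)
  have "((\<lambda>q. H x p q) has_real_derivative H' (x, p, v) (0, 0, 1)) (at v)" for x p v
    using has_real_derivative_along_line[OF H'[of "(x, p, 0) + v *\<^sub>R (0, 0, 1)"]] by simp
  then have Hu: "Hu H x p v = H' (x, p, v) (0, 0, 1)" for x p v
    unfolding Hu_def by (rule DERIV_imp_deriv)
  show ?thesis
    using H' H'_diff Hp Hu by blast
qed

lemma continuous_on_H: "continuous_on UNIV (\<lambda>(x, p, u). H x p u)"
  using H_smooth Ck.simps(1) unfolding smooth_fun_def by blast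

lemma H_has_derivative_along_line:
  "((\<lambda>\<theta>. H x (p + \<theta> * \<alpha>) (v + \<theta> * \<beta>)) has_real_derivative
     \<alpha> * Hp H x (p + s * \<alpha>) (v + s * \<beta>) + \<beta> * Hu H x (p + s * \<alpha>) (v + s * \<beta>)) (at s)"
proof -
  obtain H' where H': "\<And>z. ((\<lambda>(x, p, u). H x p u) has_derivative H' z) (at z)"
    and Hp: "\<And>x p v. Hp H x p v = H' (x, p, v) (0, 1, 0)"
    and Hu: "\<And>x p v. Hu H x p v = H' (x, p, v) (0, 0, 1)"
    using smooth_H_derivative by blast
  have "H' z (0, \<alpha>, \<beta>) = \<alpha> * H' z (0, 1, 0) + \<beta> * H' z (0, 0, 1)" for z
  proof -
    have "(0, \<alpha>, \<beta>) = \<alpha> *\<^sub>R (0, 1, 0) + \<beta> *\<^sub>R (0::real, 0::real, 1::real)"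
      by simp
    then show ?thesis
      using linear_add[OF has_derivative_linear[OF H']]
        linear_scale[OF has_derivative_linear[OF H']]
      by (metis real_scaleR_def)
  qed
  then show ?thesis
    using has_real_derivative_along_line[OF H'[of "(x, p, v) + s *\<^sub>R (0, \<alpha>, \<beta>)"]]
    by (simp add: Hp Hu algebra_simps)
qed

lemma Hp_has_derivative: "((\<lambda>q. H x q v) has_real_derivative Hp H x p v) (at p)"
  using H_has_derivative_along_line[of x 0 1 v 0 p] by simp

lemma continuous_on_Hp: "continuous_on UNIV (\<lambda>(x, p, v). Hp H x p v)"
  and continuous_on_Hu: "continuous_on UNIV (\<lambda>(x, p, v). Hu H x p v)"
proof -
  obtain H' where "\<And>z. ((\<lambda>(x, p, u). H x p u) has_derivative H' z) (at z)"
    and H'_diff: "\<And>w z. (\<lambda>z. H' z w) differentiable (at z)"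
    and "\<And>x p v. Hp H x p v = H' (x, p, v) (0, 1, 0)" "\<And>x p v. Hu H x p v = H' (x, p, v) (0, 0, 1)"
    using smooth_H_derivative by blast
  then have "(\<lambda>(x, p, v). Hp H x p v) = (\<lambda>z. H' z (0, 1, 0))"
    "(\<lambda>(x, p, v). Hu H x p v) = (\<lambda>z. H' z (0, 0, 1))"
    by auto
  moreover have "continuous_on UNIV (\<lambda>z. H' z w)" for w
    using H'_diff
    by (intro continuous_at_imp_continuous_on ballI differentiable_imp_continuous_within)
  ultimately show "continuous_on UNIV (\<lambda>(x, p, v). Hp H x p v)"
    "continuous_on UNIV (\<lambda>(x, p, v). Hu H x p v)"
    by simp_all
qed

lemma Hpp_has_derivative: "((\<lambda>q. Hp H x q v) has_real_derivative Hpp H x p v) (at p)"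
proof -
  obtain H' where "\<And>z. ((\<lambda>(x, p, u). H x p u) has_derivative H' z) (at z)"
    and H'_diff: "\<And>w z. (\<lambda>z. H' z w) differentiable (at z)"
    and Hp: "\<And>x p v. Hp H x p v = H' (x, p, v) (0, 1, 0)"
    and "\<And>x p v. Hu H x p v = H' (x, p, v) (0, 0, 1)"
    using smooth_H_derivative by blast
  obtain L where "((\<lambda>z. H' z (0, 1, 0)) has_derivative L) (at ((x, 0, v) + p *\<^sub>R (0, 1, 0)))"
    using H'_diff unfolding differentiable_def by blast
  from has_real_derivative_along_line[OF this]
  have "((\<lambda>q. Hp H x q v) has_real_derivative L (0, 1, 0)) (at p)"
    by (simp add: Hp)
  moreover from this have "Hpp H x p v = L (0, 1, 0)"
    unfolding Hpp_def by (rule DERIV_imp_deriv)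
  ultimately show ?thesis
    by simp
qed

lemma continuous_on_compose_Hp_Hu:
  assumes "continuous_on A a" "continuous_on A b" "continuous_on A c"
  shows "continuous_on A (\<lambda>z. Hp H (a z) (b z) (c z))"
    "continuous_on A (\<lambda>z. Hu H (a z) (b z) (c z))"
proof -
  have "continuous_on A (\<lambda>z. (a z, b z, c z))"
    using assms by (intro continuous_intros)
  then show "continuous_on A (\<lambda>z. Hp H (a z) (b z) (c z))"
    "continuous_on A (\<lambda>z. Hu H (a z) (b z) (c z))"
    using continuous_on_compose2[OF continuous_on_Hp _ subset_UNIV]
      continuous_on_compose2[OF continuous_on_Hu _ subset_UNIV] by fastforce+
qed

text \<open>The mean value theorem along the segment reduces the estimate to the uniform continuity of
  Hp and Hu.\<close>
lemma uniform_linearization: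
  fixes P V S T :: "real \<Rightarrow> real"
  assumes "compact K" and cont: "continuous_on UNIV P" "continuous_on UNIV V" "continuous_on UNIV S"
      "continuous_on UNIV T"
    and "0 < \<delta>"
  shows "\<exists>\<eta>>0. \<forall>x\<in>K. \<forall>d. \<bar>d\<bar> \<le> \<eta> \<longrightarrow>
    \<bar>H x (P x + d * S x) (V x + d * T x) - H x (P x) (V x)
      - d * (S x * Hp H x (P x) (V x) + T x * Hu H x (P x) (V x))\<bar> \<le> \<delta> * \<bar>d\<bar>"
proof -
  define g where "g x e =
    S x * Hp H x (P x + e * S x) (V x + e * T x) + T x * Hu H x (P x + e * S x) (V x + e * T x)"
    for x e
  have fst_cont: "continuous_on UNIV (\<lambda>z::real \<times> real. f (fst z))"
    if "continuous_on UNIV f" for f :: "real \<Rightarrow> real"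
    by (rule continuous_on_compose2[OF that continuous_on_fst[OF continuous_on_id] subset_UNIV])
  have "continuous_on UNIV (\<lambda>z. g (fst z) (snd z))"
    unfolding g_def using fst_cont[OF cont(1)] fst_cont[OF cont(2)] fst_cont[OF cont(3)]
      fst_cont[OF cont(4)]
    by (intro continuous_intros continuous_on_compose_Hp_Hu)
  then have "continuous_on (K \<times> {-1..1}) (\<lambda>z. g (fst z) (snd z))"
    by (rule continuous_on_subset) simp
  then obtain \<eta> where "0 < \<eta>" and \<eta>: "\<forall>x\<in>K. \<forall>e. \<bar>e\<bar> \<le> \<eta> \<longrightarrow> \<bar>g x e - g x 0\<bar> < \<delta>"
    using uniformly_small_increment[OF \<open>compact K\<close> _ \<open>0 < \<delta>\<close>] by blast
  show ?thesis
  proof (intro exI[of _ \<eta>] conjI ballI allI impI \<open>0 < \<eta>\<close>)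
    fix x d
    assume "x \<in> K" "\<bar>d\<bar> \<le> \<eta>"
    define \<phi> where "\<phi> \<theta> = H x (P x + \<theta> * (d * S x)) (V x + \<theta> * (d * T x))" for \<theta>
    define \<phi>' where "\<phi>' \<theta> = d * S x * Hp H x (P x + \<theta> * (d * S x)) (V x + \<theta> * (d * T x))
      + d * T x * Hu H x (P x + \<theta> * (d * S x)) (V x + \<theta> * (d * T x))" for \<theta>
    have "(\<phi> has_real_derivative \<phi>' \<theta>) (at \<theta>)" for \<theta>
      unfolding \<phi>_def \<phi>'_def by (rule H_has_derivative_along_line)
    then obtain \<theta> where "0 < \<theta>" "\<theta> < 1" and mvt: "\<phi> 1 - \<phi> 0 = (1 - 0) * \<phi>' \<theta>"
      using MVT2[of 0 1 \<phi> \<phi>'] by auto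
    have "\<bar>\<theta> * d\<bar> \<le> \<bar>d\<bar>"
      using \<open>0 < \<theta>\<close> \<open>\<theta> < 1\<close> by (simp add: abs_mult mult_left_le_one_le)
    then have "\<bar>\<theta> * d\<bar> \<le> \<eta>"
      using \<open>\<bar>d\<bar> \<le> \<eta>\<close> by linarith
    then have "\<bar>d\<bar> * \<bar>g x (\<theta> * d) - g x 0\<bar> \<le> \<bar>d\<bar> * \<delta>"
      using \<eta> \<open>x \<in> K\<close> by (intro mult_left_mono) (auto simp: less_imp_le)
    moreover have "H x (P x + d * S x) (V x + d * T x) - H x (P x) (V x)
        - d * (S x * Hp H x (P x) (V x) + T x * Hu H x (P x) (V x)) = d * (g x (\<theta> * d) - g x 0)"
      using mvt by (simp add: \<phi>_def \<phi>'_def g_def algebra_simps)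
    ultimately show "\<bar>H x (P x + d * S x) (V x + d * T x) - H x (P x) (V x)
        - d * (S x * Hp H x (P x) (V x) + T x * Hu H x (P x) (V x))\<bar> \<le> \<delta> * \<bar>d\<bar>"
      by (simp add: abs_mult mult.commute)
  qed
qed

lemma convex_viscosity_solution_if_viscosity_solution:
  assumes convex: "\<forall>x p u. Hpp H x p u > 0" and superlinear: "\<forall>x u M. \<exists>C. \<forall>p. H x p u \<ge> M * \<bar>p\<bar> - C"
    and "viscosity_solution H u0"
  shows "convex_viscosity_solution H u0"
proof
  show "continuous_on UNIV (\<lambda>(x, p, v). H x p v)"
    by (rule continuous_on_H)
  show "strictly_convex (\<lambda>p. H x p v)" for x v
  proof (rule strictly_convex_if_deriv_strict_mono)
    show "((\<lambda>p. H x p v) has_real_derivative Hp H x q v) (at q)" for q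
      by (rule Hp_has_derivative)
    show "Hp H x p v < Hp H x q v" if "p < q" for p q
      using DERIV_pos_imp_increasing[OF that] Hpp_has_derivative convex by blast
  qed
  show "\<exists>C. \<forall>p. \<bar>p\<bar> - C \<le> H x p v" for x v
    using superlinear[rule_format, of 1 x v] by auto
qed (use assms(3) in \<open>auto simp: viscosity_solution_def\<close>)

text \<open>If the zero sublevel set of H z \<cdot> (u0 z) is a single slope, u0 is differentiable at z with
  that slope, which then minimises H z \<cdot> (u0 z); so Hp vanishes there.\<close>
lemma slope_lo_less_hi_if_Hp_nonzero:
  assumes cvs: "convex_viscosity_solution H u0"
    and nondeg: "\<forall>x. u0 differentiable (at x) \<longrightarrow> Hp H x (deriv u0 x) (u0 x) \<noteq> 0"
  shows "convex_viscosity_solution.slope_lo H u0 z < convex_viscosity_solution.slope_hi H u0 z"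
proof -
  interpret convex_viscosity_solution H u0
    by (rule cvs)
  show ?thesis
  proof (rule ccontr)
    assume "\<not> slope_lo z < slope_hi z"
    then have eq: "slope_lo z = slope_hi z"
      using slope_lo_le_hi[of z] by linarith
    then have D: "(u0 has_real_derivative slope_lo z) (at z)"
      by (rule has_derivative_if_degenerate)
    then have "Hp H z (slope_lo z) (u0 z) \<noteq> 0"
      using nondeg DERIV_imp_deriv[OF D] real_differentiable_def by metis
    moreover have "Hp H z (slope_lo z) (u0 z) = 0"
    proof (rule DERIV_local_min[OF Hp_has_derivative zero_less_one, rule_format])
      fix y
      show "H z (slope_lo z) (u0 z) \<le> H z y (u0 z)"
        using G_nonpos_iff[of z y] G_slope_lo[of z] eq by (cases "H z y (u0 z) \<le> 0") auto
    qed
    ultimately show False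
      by simp
  qed
qed

lemma viscosity_solution_C1:
  assumes convex: "\<forall>x p u. Hpp H x p u > 0" and superlinear: "\<forall>x u M. \<exists>C. \<forall>p. H x p u \<ge> M * \<bar>p\<bar> - C"
    and periodic: "\<forall>x p u. H (x + 1) p u = H x p u" and visc: "viscosity_solution H u0"
    and nondeg: "\<forall>x. u0 differentiable (at x) \<longrightarrow> Hp H x (deriv u0 x) (u0 x) \<noteq> 0"
  shows "\<exists>c. continuous_on UNIV c \<and> (\<forall>z. (u0 has_real_derivative c z) (at z)) \<and>
    (\<forall>z. H z (c z) (u0 z) = 0) \<and> (\<forall>z. Hp H z (c z) (u0 z) \<noteq> 0)"
proof -
  have cvs: "convex_viscosity_solution H u0"
    by (rule convex_viscosity_solution_if_viscosity_solution[OF convex superlinear visc])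
  interpret convex_viscosity_solution H u0
    by (rule cvs)
  have nondeg_slopes: "slope_lo z < slope_hi z" for z
    by (rule slope_lo_less_hi_if_Hp_nonzero[OF cvs nondeg])
  have "u0 (x + 1) = u0 x" for x
    using visc by (simp add: viscosity_solution_def periodic1_def)
  then obtain c where c: "c = slope_lo \<or> c = slope_hi"
    and deriv: "\<And>z. (u0 has_real_derivative c z) (at z)"
    using derivative_slope_lo_or_slope_hi[OF nondeg_slopes] periodic by blast
  have "continuous_on UNIV c"
    using c isCont_slope_lo[OF nondeg_slopes] isCont_slope_hi[OF nondeg_slopes]
    by (auto intro: continuous_at_imp_continuous_on)
  moreover have "Hp H z (c z) (u0 z) \<noteq> 0" for z
    using nondeg DERIV_imp_deriv[OF deriv] deriv real_differentiable_def by metis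
  ultimately show ?thesis
    using deriv equation_if_C1[OF deriv] by blast
qed

end

section \<open>The perturbed solutions\<close>

lemma has_real_derivative_integral_from_0:
  fixes g :: "real \<Rightarrow> real"
  assumes "continuous_on UNIV g"
  shows "((\<lambda>x. LBINT \<tau>=0..x. g \<tau>) has_real_derivative g x) (at x)"
proof -
  define a where "a = min (x - 1) (-1)"
  define b where "b = max (x + 1) 1"
  have "((\<lambda>x. LBINT \<tau>=ereal 0..ereal x. g \<tau>) has_vector_derivative g x) (at x within {a..b})"
    by (rule interval_integral_FTC2) (auto simp: a_def b_def intro: continuous_on_subset[OF assms])
  moreover have "at x within {a..b} = at x"
    by (rule at_within_interior) (auto simp: a_def b_def)
  ultimately show ?thesis
    by (simp add: zero_ereal_def has_real_derivative_iff_has_vector_derivative)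
qed

lemma abs_mult_exp_le:
  fixes \<epsilon>0 \<epsilon> \<Theta> t :: real
  assumes "0 < \<epsilon>0" "\<epsilon> \<noteq> 0" "\<Theta> < 0" "t \<le> (ln \<epsilon>0 - ln \<bar>\<epsilon>\<bar>) / (- \<Theta>)"
  shows "\<bar>\<epsilon> * exp (- \<Theta> * t)\<bar> \<le> \<epsilon>0"
proof -
  have "t * (- \<Theta>) \<le> ln \<epsilon>0 - ln \<bar>\<epsilon>\<bar>"
    using assms(4) pos_le_divide_eq[of "- \<Theta>"] assms(3) by simp
  then have "- \<Theta> * t \<le> ln \<epsilon>0 - ln \<bar>\<epsilon>\<bar>"
    by (simp add: mult.commute)
  then have "exp (- \<Theta> * t) \<le> \<epsilon>0 / \<bar>\<epsilon>\<bar>"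
    using assms(1,2) by (metis exp_diff exp_le_cancel_iff exp_ln zero_less_abs_iff)
  then show ?thesis
    using assms(2) by (simp add: abs_mult field_simps)
qed

context
  fixes H :: "real \<Rightarrow> real \<Rightarrow> real \<Rightarrow> real" and u0 c :: "real \<Rightarrow> real"
  assumes H_smooth: "smooth_fun (\<lambda>(x, p, u). H x p u)"
    and continuous_c: "continuous_on UNIV c"
    and u0_deriv: "\<And>z. (u0 has_real_derivative c z) (at z)"
    and Hp_nonzero: "\<And>z. Hp H z (c z) (u0 z) \<noteq> 0"
begin

lemma continuous_on_u0: "continuous_on UNIV u0"
  using u0_deriv by (meson DERIV_isCont continuous_at_imp_continuous_on)

lemma continuous_on_rho_exponent:
  "continuous_on UNIV (\<lambda>\<tau>. (mu_const H u0 - Hu H \<tau> (c \<tau>) (u0 \<tau>)) / Hp H \<tau> (c \<tau>) (u0 \<tau>))"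
  using Hp_nonzero
  by (intro continuous_intros continuous_on_compose_Hp_Hu[OF H_smooth] continuous_c
      continuous_on_u0) auto

lemma rho_has_derivative:
  "(rho H u0 has_real_derivative
      rho H u0 x * ((mu_const H u0 - Hu H x (c x) (u0 x)) / Hp H x (c x) (u0 x))) (at x)"
proof -
  have "deriv u0 = c"
    using u0_deriv DERIV_imp_deriv by blast
  then have "rho H u0 =
      (\<lambda>x. exp (LBINT \<tau>=0..x. (mu_const H u0 - Hu H \<tau> (c \<tau>) (u0 \<tau>)) / Hp H \<tau> (c \<tau>) (u0 \<tau>)))"
    by (simp add: rho_def Bfun_def fun_eq_iff)
  then show ?thesis
    using has_real_derivative_integral_from_0[OF continuous_on_rho_exponent]
    by (auto intro!: derivative_eq_intros)
qed

lemma rho_has_deriv: "(rho H u0 has_real_derivative deriv (rho H u0) x) (at x)"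
  using DERIV_imp_deriv[OF rho_has_derivative] rho_has_derivative by simp

lemma continuous_on_rho: "continuous_on UNIV (rho H u0)"
  using rho_has_derivative by (meson DERIV_isCont continuous_at_imp_continuous_on)

lemma continuous_on_deriv_rho: "continuous_on UNIV (deriv (rho H u0))"
proof -
  have "deriv (rho H u0) =
      (\<lambda>x. rho H u0 x * ((mu_const H u0 - Hu H x (c x) (u0 x)) / Hp H x (c x) (u0 x)))"
    using rho_has_derivative DERIV_imp_deriv by blast
  moreover have "continuous_on UNIV
      (\<lambda>x. rho H u0 x * ((mu_const H u0 - Hu H x (c x) (u0 x)) / Hp H x (c x) (u0 x)))"
    by (intro continuous_on_mult continuous_on_rho continuous_on_rho_exponent)
  ultimately show ?thesis
    by (simp only:)
qed

lemma rho_ode: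
  "Hp H x (c x) (u0 x) * deriv (rho H u0) x + Hu H x (c x) (u0 x) * rho H u0 x =
    mu_const H u0 * rho H u0 x"
  using DERIV_imp_deriv[OF rho_has_derivative] Hp_nonzero[of x] by (simp add: field_simps)

lemma w_eps_residual:
  assumes "d = \<epsilon> * exp (- \<Theta> * t)"
  shows "deriv (\<lambda>s. w_eps H u0 \<Theta> \<epsilon> x s) t
      + H x (deriv (\<lambda>y. w_eps H u0 \<Theta> \<epsilon> y t) x) (w_eps H u0 \<Theta> \<epsilon> x t)
    = d * \<Theta> * rho H u0 x + H x (c x - d * deriv (rho H u0) x) (u0 x - d * rho H u0 x)"
proof -
  have dt: "deriv (\<lambda>s. w_eps H u0 \<Theta> \<epsilon> x s) t = d * \<Theta> * rho H u0 x"
    unfolding w_eps_def assms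
    by (rule DERIV_imp_deriv) (auto intro!: derivative_eq_intros simp: algebra_simps)
  have dx: "deriv (\<lambda>y. w_eps H u0 \<Theta> \<epsilon> y t) x = c x - d * deriv (rho H u0) x"
    unfolding w_eps_def assms
    by (rule DERIV_imp_deriv)
      (auto intro!: derivative_eq_intros u0_deriv rho_has_deriv simp: algebra_simps)
  have "w_eps H u0 \<Theta> \<epsilon> x t = u0 x - d * rho H u0 x"
    by (simp add: w_eps_def assms mult_ac)
  then show ?thesis
    by (simp only: dt dx)
qed

text \<open>The perturbation of u0 in the direction of rho changes the Hamiltonian by
  - d mu rho to first order, which is dominated by d Theta rho because Theta > mu.\<close>
lemma w_eps_residual_sign:
  assumes H_c: "\<And>z. H z (c z) (u0 z) = 0" and "mu_const H u0 < \<Theta>"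
  shows "\<exists>\<eta>>0. \<forall>x\<in>{0..1}. \<forall>d. \<bar>d\<bar> \<le> \<eta> \<longrightarrow>
    0 \<le> d * (d * \<Theta> * rho H u0 x + H x (c x - d * deriv (rho H u0) x) (u0 x - d * rho H u0 x))"
proof -
  define \<mu> where "\<mu> = mu_const H u0"
  define \<rho> where "\<rho> = rho H u0"
  define \<rho>' where "\<rho>' = deriv (rho H u0)"
  have "continuous_on {0..1} (\<lambda>x. \<rho> x * (\<Theta> - \<mu>))"
    unfolding \<rho>_def by (intro continuous_intros continuous_on_subset[OF continuous_on_rho]) auto
  then have "\<exists>x0\<in>{0..1}. \<forall>x\<in>{0..1}. \<rho> x0 * (\<Theta> - \<mu>) \<le> \<rho> x * (\<Theta> - \<mu>)"
    by (intro continuous_attains_inf[OF compact_Icc]) auto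
  then obtain x0 where x0: "\<forall>x\<in>{0..1}. \<rho> x0 * (\<Theta> - \<mu>) \<le> \<rho> x * (\<Theta> - \<mu>)"
    by blast
  define m where "m = \<rho> x0 * (\<Theta> - \<mu>)"
  have "0 < m"
    using assms(2) by (simp add: m_def \<rho>_def \<mu>_def rho_def)
  have "continuous_on UNIV (\<lambda>x. - \<rho>' x)" "continuous_on UNIV (\<lambda>x. - \<rho> x)"
    unfolding \<rho>_def \<rho>'_def using continuous_on_deriv_rho continuous_on_rho
    by (auto intro: continuous_on_minus)
  then obtain \<eta> where "0 < \<eta>" and \<eta>: "\<forall>x\<in>{0..1}. \<forall>d. \<bar>d\<bar> \<le> \<eta> \<longrightarrow>
      \<bar>H x (c x + d * - \<rho>' x) (u0 x + d * - \<rho> x) - H x (c x) (u0 x)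
        - d * (- \<rho>' x * Hp H x (c x) (u0 x) + - \<rho> x * Hu H x (c x) (u0 x))\<bar> \<le> m * \<bar>d\<bar>"
    using uniform_linearization[OF H_smooth compact_Icc continuous_c continuous_on_u0 _ _ \<open>0 < m\<close>]
    by blast
  show ?thesis
  proof (intro exI[of _ \<eta>] conjI ballI allI impI \<open>0 < \<eta>\<close>)
    fix x d :: real
    assume "x \<in> {0..1}" "\<bar>d\<bar> \<le> \<eta>"
    define E where "E = H x (c x - d * \<rho>' x) (u0 x - d * \<rho> x)"
    have "- \<rho>' x * Hp H x (c x) (u0 x) + - \<rho> x * Hu H x (c x) (u0 x) = - (\<mu> * \<rho> x)"
      using rho_ode[of x] unfolding \<mu>_def \<rho>_def \<rho>'_def by (simp add: algebra_simps)
    then have "\<bar>E + d * \<mu> * \<rho> x\<bar> \<le> m * \<bar>d\<bar>"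
      using \<eta>[rule_format, OF \<open>x \<in> {0..1}\<close> \<open>\<bar>d\<bar> \<le> \<eta>\<close>] H_c[of x] by (simp add: E_def mult.assoc)
    then have "\<bar>d * (E + d * \<mu> * \<rho> x)\<bar> \<le> \<bar>d\<bar> * (m * \<bar>d\<bar>)"
      by (simp add: abs_mult mult_left_mono)
    then have "- (d * d * m) \<le> d * (E + d * \<mu> * \<rho> x)"
      by (simp add: abs_le_iff abs_mult_self_eq mult.commute mult.left_commute)
    moreover have "d * d * m \<le> d * d * (\<rho> x * (\<Theta> - \<mu>))"
      using x0 \<open>x \<in> {0..1}\<close> by (simp add: m_def mult_left_mono)
    moreover have "d * (d * \<Theta> * \<rho> x + E) = d * d * (\<rho> x * (\<Theta> - \<mu>)) + d * (E + d * \<mu> * \<rho> x)"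
      by (simp add: algebra_simps)
    ultimately show
      "0 \<le> d * (d * \<Theta> * rho H u0 x + H x (c x - d * deriv (rho H u0) x) (u0 x - d * rho H u0 x))"
      unfolding E_def \<rho>_def \<rho>'_def by linarith
  qed
qed

lemma w_eps_sign:
  assumes "\<And>z. H z (c z) (u0 z) = 0" "mu_const H u0 < \<Theta>" "\<Theta> < 0"
  shows "\<exists>\<eta>>0. \<forall>\<epsilon> x t. \<epsilon> \<noteq> 0 \<longrightarrow> \<bar>\<epsilon>\<bar> \<le> \<eta> \<longrightarrow> x \<in> {0..1} \<longrightarrow> t \<le> (ln \<eta> - ln \<bar>\<epsilon>\<bar>) / (- \<Theta>) \<longrightarrow>
    0 \<le> \<epsilon> * (deriv (\<lambda>s. w_eps H u0 \<Theta> \<epsilon> x s) t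
      + H x (deriv (\<lambda>y. w_eps H u0 \<Theta> \<epsilon> y t) x) (w_eps H u0 \<Theta> \<epsilon> x t))"
proof -
  obtain \<eta> where "0 < \<eta>" and \<eta>: "\<forall>x\<in>{0..1}. \<forall>d. \<bar>d\<bar> \<le> \<eta> \<longrightarrow>
      0 \<le> d * (d * \<Theta> * rho H u0 x + H x (c x - d * deriv (rho H u0) x) (u0 x - d * rho H u0 x))"
    using w_eps_residual_sign[OF assms(1,2)] by blast
  show ?thesis
  proof (intro exI[of _ \<eta>] conjI allI impI \<open>0 < \<eta>\<close>)
    fix \<epsilon> x t :: real
    assume "\<epsilon> \<noteq> 0" "\<bar>\<epsilon>\<bar> \<le> \<eta>" "x \<in> {0..1}" and t: "t \<le> (ln \<eta> - ln \<bar>\<epsilon>\<bar>) / (- \<Theta>)"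
    define d where "d = \<epsilon> * exp (- \<Theta> * t)"
    have "\<bar>d\<bar> \<le> \<eta>"
      unfolding d_def by (rule abs_mult_exp_le[OF \<open>0 < \<eta>\<close> \<open>\<epsilon> \<noteq> 0\<close> assms(3) t])
    then have "0 \<le> d * (deriv (\<lambda>s. w_eps H u0 \<Theta> \<epsilon> x s) t
        + H x (deriv (\<lambda>y. w_eps H u0 \<Theta> \<epsilon> y t) x) (w_eps H u0 \<Theta> \<epsilon> x t))"
      unfolding w_eps_residual[OF d_def] using \<eta> \<open>x \<in> {0..1}\<close> by blast
    then have "0 \<le> exp (- \<Theta> * t) * (\<epsilon> * (deriv (\<lambda>s. w_eps H u0 \<Theta> \<epsilon> x s) t
        + H x (deriv (\<lambda>y. w_eps H u0 \<Theta> \<epsilon> y t) x) (w_eps H u0 \<Theta> \<epsilon> x t)))"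
      by (simp add: d_def mult_ac)
    then show "0 \<le> \<epsilon> * (deriv (\<lambda>s. w_eps H u0 \<Theta> \<epsilon> x s) t
        + H x (deriv (\<lambda>y. w_eps H u0 \<Theta> \<epsilon> y t) x) (w_eps H u0 \<Theta> \<epsilon> x t))"
      by (simp add: zero_le_mult_iff)
  qed
qed

end

theorem lemma2p4:
  fixes H :: "real \<Rightarrow> real \<Rightarrow> real \<Rightarrow> real" and u0 :: "real \<Rightarrow> real"
    and \<kappa> \<Theta> :: real
  assumes H_smooth: "smooth_fun (\<lambda>(x::real, p::real, u::real). H x p u)"
    and H_periodic: "\<forall>x p u. H (x + 1) p u = H x p u"
    and H_convex: "\<forall>x p u. Hpp H x p u > 0"
    and H_superlinear: "\<forall>x u M. \<exists>C. \<forall>p. H x p u \<ge> M * \<bar>p\<bar> - C"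
    and kappa_pos: "\<kappa> > 0"
    and H_u_bound: "\<forall>x p u. \<bar>Hu H x p u\<bar> \<le> \<kappa>"
    and u0_visc: "viscosity_solution H u0"
    and u0_nondeg: "\<forall>x. u0 differentiable (at x) \<longrightarrow> Hp H x (deriv u0 x) (u0 x) \<noteq> 0"
    and mu_neg: "mu_const H u0 < 0"
    and Theta: "mu_const H u0 < \<Theta>" "\<Theta> < 0"
  shows "\<exists>\<epsilon>0>0.
     (\<forall>\<epsilon>\<in>{0<..\<epsilon>0}. \<forall>x\<in>{0..1}. \<forall>t\<in>{0..(ln \<epsilon>0 - ln \<bar>\<epsilon>\<bar>) / (- \<Theta>)}.
        deriv (\<lambda>s. w_eps H u0 \<Theta> \<epsilon> x s) t
          + H x (deriv (\<lambda>y. w_eps H u0 \<Theta> \<epsilon> y t) x) (w_eps H u0 \<Theta> \<epsilon> x t) \<ge> 0) \<and>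
     (\<forall>\<epsilon>\<in>{-\<epsilon>0..<0}. \<forall>x\<in>{0..1}. \<forall>t\<in>{0..(ln \<epsilon>0 - ln \<bar>\<epsilon>\<bar>) / (- \<Theta>)}.
        deriv (\<lambda>s. w_eps H u0 \<Theta> \<epsilon> x s) t
          + H x (deriv (\<lambda>y. w_eps H u0 \<Theta> \<epsilon> y t) x) (w_eps H u0 \<Theta> \<epsilon> x t) \<le> 0)"
proof -
  obtain c where "continuous_on UNIV c" "\<And>z. (u0 has_real_derivative c z) (at z)"
    "\<And>z. H z (c z) (u0 z) = 0" "\<And>z. Hp H z (c z) (u0 z) \<noteq> 0"
    using viscosity_solution_C1[OF H_smooth H_convex H_superlinear H_periodic u0_visc u0_nondeg]
    by blast
  from w_eps_sign[OF H_smooth this(1,2,4,3) Theta]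
  obtain \<eta> where "0 < \<eta>" and sign: "\<forall>\<epsilon> x t. \<epsilon> \<noteq> 0 \<longrightarrow> \<bar>\<epsilon>\<bar> \<le> \<eta> \<longrightarrow> x \<in> {0..1} \<longrightarrow>
      t \<le> (ln \<eta> - ln \<bar>\<epsilon>\<bar>) / (- \<Theta>) \<longrightarrow>
      0 \<le> \<epsilon> * (deriv (\<lambda>s. w_eps H u0 \<Theta> \<epsilon> x s) t
        + H x (deriv (\<lambda>y. w_eps H u0 \<Theta> \<epsilon> y t) x) (w_eps H u0 \<Theta> \<epsilon> x t))"
    by blast
  show ?thesis
  proof (intro exI[of _ \<eta>] conjI ballI \<open>0 < \<eta>\<close>)
    fix \<epsilon> x t :: real
    assume "\<epsilon> \<in> {0<..\<eta>}" "x \<in> {0..1}" "t \<in> {0..(ln \<eta> - ln \<bar>\<epsilon>\<bar>) / (- \<Theta>)}"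
    then show "deriv (\<lambda>s. w_eps H u0 \<Theta> \<epsilon> x s) t
        + H x (deriv (\<lambda>y. w_eps H u0 \<Theta> \<epsilon> y t) x) (w_eps H u0 \<Theta> \<epsilon> x t) \<ge> 0"
      using sign[rule_format, of \<epsilon> x t] by (simp add: zero_le_mult_iff)
  next
    fix \<epsilon> x t :: real
    assume "\<epsilon> \<in> {-\<eta>..<0}" "x \<in> {0..1}" "t \<in> {0..(ln \<eta> - ln \<bar>\<epsilon>\<bar>) / (- \<Theta>)}"
    then show "deriv (\<lambda>s. w_eps H u0 \<Theta> \<epsilon> x s) t
        + H x (deriv (\<lambda>y. w_eps H u0 \<Theta> \<epsilon> y t) x) (w_eps H u0 \<Theta> \<epsilon> x t) \<le> 0"
      using sign[rule_format, of \<epsilon> x t] by (simp add: zero_le_mult_iff)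
  qed
qed

end
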